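(* Assume bifurcation assumption (B) with non-critical maximal cells, fix a root subnetwork $B$, and let $p\in C\setminus B$ be critical. Assume hypothesis (H) at $p$ and condition (SN). Then generically: (i) if $\bigl(\sum_{\tau:\tau(p)\in Q_p}a_\tau d_{\tau(p)}\bigr)/\sum_{\sigma,\tau\in\mathcal L_p}f_{\sigma\tau}>0$, the $p$-th bifurcation equation has no solution branches near $0$ for small $\lambda>0$; (ii) if $\bigl(\sum_{\tau:\tau(p)\in Q_p}a_\tau d_{\tau(p)}\bigr)/\sum_{\sigma,\tau\in\mathcal L_p}f_{\sigma\tau}<0$, it has the two (higher order saddle-node) branches $$x_p(\lambda)=d_p^\pm\lambda^{2^{-(\Xi_p+1)}}+O\bigl(|\lambda|^{2^{-\Xi_p}}\bigr)\ \text{for small }\lambda>0,\qquad d_p^\pm=\pm\sqrt{-\frac{\sum_{\tau:\tau(p)\in Q_p}a_\tau d_{\tau(p)}}{\sum_{\sigma,\tau\in\mathcal L_p}f_{\sigma\tau}}}\neq0.$$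
   Context: Network: finite cells $C$, pairwise distinct maps $\Sigma=\{\sigma_1,\dots,\sigma_n\}$, $\sigma_i\colon C\to C$, $\sigma_1=\mathrm{Id}_C$; feedforward (no cycles of length $\ge 2$); $p\trianglelefteq q$ iff there is a path from $q$ to $p$ (partial order), $q\vartriangleright p$ iff $p\trianglelefteq q$, $p\neq q$; maximal cells have $\sigma(p)=p$ for all $\sigma$. $\Sigma(p)=\{\sigma(p):\sigma\in\Sigma\}$, $\Sigma^\star(p)=\Sigma(p)\setminus\{p\}$. Bifurcation setting: $V=\mathbb R$, smooth $f\colon\mathbb R^n\times\mathbb R\to\mathbb R$ with first $n$ arguments labelled by $\Sigma$, $\gamma_f(x,\lambda)_p=f(x_{\sigma_1(p)},\dots,x_{\sigma_n(p)},\lambda)$; the $p$-th bifurcation equation $\gamma_f(x,\lambda)_p=0$ is solved for $x_p$ near 0 given $x_q(\lambda)$ for $q\vartriangleright p$. $a_\sigma=\partial_\sigma f(0,0)$, $f_{\sigma\tau}=\tfrac12\partial_\sigma\partial_\tau f(0,0)$. $\mathcal L_p=\{\sigma:\sigma(p)=p\}$; $p$ critical iff $\sum_{\sigma\in\mathcal L_p}a_\sigma=0$. (B): $f(0,0)=0$, some cell critical, exactly the cells sharing $\mathcal L_p$ with a critical cell are critical. Root subnetwork: a subnetwork ($\sigma(B)\subset B$ for all $\sigma$) $\emptyset\ne B\subsetneq C$ containing all maximal cells such that every $p\notin B$ with all $q\vartriangleright p$ in $B$ is critical. Hypothesis (H) at $p$: for all $q\vartriangleright p$ and small $\lambda>0$,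 $x_q(\lambda)=d_q\lambda^{2^{-\xi_q}}+O(|\lambda|^{2^{-(\xi_q-1)}})$ with $d_q\ne0$ and integers $\xi_q\ge0$; $\Xi_p=\max_{q\in\Sigma^\star(p)}\xi_q$; $Q_p=\{q\in\Sigma^\star(p):\xi_q=\Xi_p\}$. Condition (SN): $\Xi_p>0$ and $\sum_{\tau:\tau(p)\in Q_p}a_\tau d_{\tau(p)}\ne0$. "Generically" means for an open dense set of Taylor coefficients of $f$ at $(0,0)$. *)

theory Defs
  imports "HOL-Analysis.Analysis" "HOL-Library.Landau_Symbols"
begin

text \<open>Cells are the elements of a finite type 'c (so C = UNIV). The maps
  sigma_1..sigma_n are given by an injective labelling sig :: 's => 'c => 'c,
  indexed by a finite type 's; the distinguished index s1 has sig s1 = id.\<close>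

definition edges :: "('s \<Rightarrow> 'c \<Rightarrow> 'c) \<Rightarrow> ('c \<times> 'c) set" where
  "edges sig = {(sig s r, r) | s r. True}"

definition net_le :: "('s \<Rightarrow> 'c \<Rightarrow> 'c) \<Rightarrow> 'c \<Rightarrow> 'c \<Rightarrow> bool" where
  "net_le sig p q \<longleftrightarrow> (q, p) \<in> (edges sig)\<^sup>*"

definition net_above :: "('s \<Rightarrow> 'c \<Rightarrow> 'c) \<Rightarrow> 'c \<Rightarrow> 'c \<Rightarrow> bool" where
  "net_above sig q p \<longleftrightarrow> net_le sig p q \<and> p \<noteq> q"

text \<open>Feedforward: no cycles of length at least 2 (self loops allowed).\<close>
definition feedforward :: "('s \<Rightarrow> 'c \<Rightarrow> 'c) \<Rightarrow> bool" where
  "feedforward sig \<longleftrightarrow> (\<forall>p q. net_le sig p q \<and> net_le sig q p \<longrightarrow> p = q)"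

definition network :: "('s \<Rightarrow> 'c \<Rightarrow> 'c) \<Rightarrow> 's \<Rightarrow> bool" where
  "network sig s1 \<longleftrightarrow> inj sig \<and> sig s1 = id \<and> feedforward sig"

definition maximal_cell :: "('s \<Rightarrow> 'c \<Rightarrow> 'c) \<Rightarrow> 'c \<Rightarrow> bool" where
  "maximal_cell sig p \<longleftrightarrow> \<not> (\<exists>q. net_above sig q p)"

definition Sig_of :: "('s \<Rightarrow> 'c \<Rightarrow> 'c) \<Rightarrow> 'c \<Rightarrow> 'c set" where
  "Sig_of sig p = range (\<lambda>s. sig s p)"

definition Sig_star :: "('s \<Rightarrow> 'c \<Rightarrow> 'c) \<Rightarrow> 'c \<Rightarrow> 'c set" where
  "Sig_star sig p = Sig_of sig p - {p}"

definition Lset :: "('s \<Rightarrow> 'c \<Rightarrow> 'c) \<Rightarrow> 'c \<Rightarrow> 's set" where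
  "Lset sig p = {s. sig s p = p}"

definition subnetwork :: "('s \<Rightarrow> 'c \<Rightarrow> 'c) \<Rightarrow> 'c set \<Rightarrow> bool" where
  "subnetwork sig B \<longleftrightarrow> (\<forall>s. sig s ` B \<subseteq> B)"

fun pd :: "('a::real_normed_vector \<Rightarrow> real) \<Rightarrow> 'a list \<Rightarrow> 'a \<Rightarrow> real" where
  "pd g [] = g"
| "pd g (v # vs) = (\<lambda>z. frechet_derivative (pd g vs) (at z) v)"

definition smooth :: "('a::real_normed_vector \<Rightarrow> real) \<Rightarrow> bool" where
  "smooth g \<longleftrightarrow> (\<forall>vs z. pd g vs differentiable (at z))"

text \<open>The response function f takes (x, lambda) with x in R^n (coordinates
  labelled by 's) and lambda in R.\<close>
type_synonym 's resp = "((real^'s) \<times> real) \<Rightarrow> real"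

definition dirx :: "'s::finite \<Rightarrow> (real^'s) \<times> real" where
  "dirx s = (axis s 1, 0)"

definition acoef :: "'s::finite resp \<Rightarrow> 's \<Rightarrow> real" where
  "acoef f s = pd f [dirx s] 0"

definition fcoef :: "'s::finite resp \<Rightarrow> 's \<Rightarrow> 's \<Rightarrow> real" where
  "fcoef f s t = pd f [dirx s, dirx t] 0 / 2"

definition critical :: "('s::finite \<Rightarrow> 'c \<Rightarrow> 'c) \<Rightarrow> 's resp \<Rightarrow> 'c \<Rightarrow> bool" where
  "critical sig f p \<longleftrightarrow> (\<Sum>s\<in>Lset sig p. acoef f s) = 0"

definition assumption_B :: "('s::finite \<Rightarrow> 'c \<Rightarrow> 'c) \<Rightarrow> 's resp \<Rightarrow> bool" where
  "assumption_B sig f \<longleftrightarrow> f 0 = 0 \<and> (\<exists>p. critical sig f p) \<and>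
     (\<forall>p. critical sig f p \<longleftrightarrow> (\<exists>q. critical sig f q \<and> Lset sig p = Lset sig q))"

definition root_subnetwork ::
  "('s::finite \<Rightarrow> 'c \<Rightarrow> 'c) \<Rightarrow> 's resp \<Rightarrow> 'c set \<Rightarrow> bool" where
  "root_subnetwork sig f B \<longleftrightarrow> subnetwork sig B \<and> B \<noteq> {} \<and> B \<noteq> UNIV \<and>
     (\<forall>p. maximal_cell sig p \<longrightarrow> p \<in> B) \<and>
     (\<forall>p. p \<notin> B \<and> (\<forall>q. net_above sig q p \<longrightarrow> q \<in> B) \<longrightarrow> critical sig f p)"

text \<open>Given the states xs q lambda of the cells q above p, the p-th equation
  as a function of x_p and lambda.\<close>
definition peq :: "('s::finite \<Rightarrow> 'c \<Rightarrow> 'c) \<Rightarrow> 's resp \<Rightarrow> 'c \<Rightarrow> ('c \<Rightarrow> real \<Rightarrow> real)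
    \<Rightarrow> real \<Rightarrow> real \<Rightarrow> real" where
  "peq sig f p xs x lam =
     f (\<chi> s. if sig s p = p then x else xs (sig s p) lam, lam)"

definition hyp_H :: "('s::finite \<Rightarrow> 'c \<Rightarrow> 'c) \<Rightarrow> 'c \<Rightarrow> ('c \<Rightarrow> real \<Rightarrow> real)
    \<Rightarrow> ('c \<Rightarrow> real) \<Rightarrow> ('c \<Rightarrow> nat) \<Rightarrow> bool" where
  "hyp_H sig p xs d xi \<longleftrightarrow> (\<forall>q. net_above sig q p \<longrightarrow> d q \<noteq> 0 \<and>
     (\<lambda>lam. xs q lam - d q * lam powr (2 powr (- real (xi q))))
       \<in> O[at_right 0](\<lambda>lam. lam powr (2 powr (- (real (xi q) - 1)))))"

definition Xi :: "('s \<Rightarrow> 'c \<Rightarrow> 'c) \<Rightarrow> 'c \<Rightarrow> ('c \<Rightarrow> nat) \<Rightarrow> nat" where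
  "Xi sig p xi = Max (xi ` Sig_star sig p)"

definition Qset :: "('s \<Rightarrow> 'c \<Rightarrow> 'c) \<Rightarrow> 'c \<Rightarrow> ('c \<Rightarrow> nat) \<Rightarrow> 'c set" where
  "Qset sig p xi = {q \<in> Sig_star sig p. xi q = Xi sig p xi}"

definition SNsum :: "('s::finite \<Rightarrow> 'c \<Rightarrow> 'c) \<Rightarrow> 's resp \<Rightarrow> 'c \<Rightarrow> ('c \<Rightarrow> real)
    \<Rightarrow> ('c \<Rightarrow> nat) \<Rightarrow> real" where
  "SNsum sig f p d xi = (\<Sum>t\<in>{t. sig t p \<in> Qset sig p xi}. acoef f t * d (sig t p))"

definition Fsum :: "('s::finite \<Rightarrow> 'c \<Rightarrow> 'c) \<Rightarrow> 's resp \<Rightarrow> 'c \<Rightarrow> real" where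
  "Fsum sig f p = (\<Sum>s\<in>Lset sig p. \<Sum>t\<in>Lset sig p. fcoef f s t)"

definition cond_SN :: "('s::finite \<Rightarrow> 'c \<Rightarrow> 'c) \<Rightarrow> 's resp \<Rightarrow> 'c \<Rightarrow> ('c \<Rightarrow> real)
    \<Rightarrow> ('c \<Rightarrow> nat) \<Rightarrow> bool" where
  "cond_SN sig f p d xi \<longleftrightarrow> Xi sig p xi > 0 \<and> SNsum sig f p d xi \<noteq> 0"

text \<open>Taylor coefficients of order at most k at (0,0), recorded as the values
  of the iterated partial derivatives along lists of basis vectors.\<close>
definition jet :: "nat \<Rightarrow> 's::finite resp \<Rightarrow> (((real^'s) \<times> real) list \<Rightarrow> real)" where
  "jet k f = (\<lambda>vs. if length vs \<le> k \<and> set vs \<subseteq> Basis then pd f vs 0 else 0)"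

text \<open>The space of all possible k-jets (finite-dimensional: symmetric arrays
  supported on lists of basis vectors of length at most k).\<close>
definition jet_space :: "nat \<Rightarrow> (((real^'s::finite) \<times> real) list \<Rightarrow> real) set" where
  "jet_space k = {c. (\<forall>vs. \<not> (length vs \<le> k \<and> set vs \<subseteq> Basis) \<longrightarrow> c vs = 0) \<and>
                     (\<forall>vs ws. mset vs = mset ws \<longrightarrow> c vs = c ws)}"

text \<open>k-jets compatible with f(0,0)=0 and with the cells in K being exactly
  the critical ones (k >= 1).\<close>
definition crit_jet_space :: "('s::finite \<Rightarrow> 'c \<Rightarrow> 'c) \<Rightarrow> 'c set \<Rightarrow> nat
    \<Rightarrow> (((real^'s) \<times> real) list \<Rightarrow> real) set" where
  "crit_jet_space sig K k = {c \<in> jet_space k. c [] = 0 \<and>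
     (\<forall>q. q \<in> K \<longleftrightarrow> (\<Sum>s\<in>Lset sig q. c [dirx s]) = 0)}"

text \<open>A property P of response functions holds generically among those with
  critical set K: there is an open dense set U of Taylor coefficients (of some
  finite order k) in the space of coefficients compatible with the constraints,
  such that P holds for every smooth f with critical set K whose Taylor
  coefficients lie in U.\<close>
definition generically :: "('s::finite \<Rightarrow> 'c \<Rightarrow> 'c) \<Rightarrow> 'c set \<Rightarrow> ('s resp \<Rightarrow> bool) \<Rightarrow> bool" where
  "generically sig K P \<longleftrightarrow> (\<exists>k U. k \<ge> 1 \<and>
     openin (top_of_set (crit_jet_space sig K k)) U \<and>
     crit_jet_space sig K k \<subseteq> closure U \<and>
     (\<forall>f. smooth f \<and> f 0 = 0 \<and> {q. critical sig f q} = K \<and> jet k f \<in> U \<longrightarrow> P f))"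

end

theory Submission
  imports Defs
begin

(* Write e for the direction in which x_p enters its own equation (the labels fixing p) and
   u(lambda) for the inputs from the cells above p, so that the p-th equation reads
   f(u(lambda) + x e) = 0.  Criticality of p kills the derivative of f along e.  With
   eps = lambda^(2^-(Xi_p+1)), hypothesis (H) makes u(lambda) of size eps^2, its leading part
   coming only from the cells in Q_p.  Taylor expansion along the line therefore shows that
   the equation is, uniformly for small x, the quadratic S eps^2 + P x^2 up to an error
   O(eps^4 + eps^2 |x| + (eps^2 + |x|) x^2), where S is the sum of a_tau d_tau(p) over
   tau(p) in Q_p and P the sum of f_sigma,tau over L_p.  If S/P > 0 this has no zero near 0;
   if S/P < 0 its two simple zeros +-sqrt(-S/P) eps persist up to O(eps^2) and are the only
   ones.  Genericity only has to exclude P = 0, a nontrivial linear condition on the 2-jet. *)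

section \<open>Iterated directional derivatives of smooth functions\<close>

lemma pd_has_derivative:
  assumes "smooth f"
  shows "(pd f vs has_derivative (\<lambda>v. pd f (v # vs) z)) (at z)"
proof -
  have "pd f vs differentiable (at z)"
    using assms unfolding smooth_def by blast
  then show ?thesis
    by (simp add: frechet_derivative_works[symmetric])
qed

lemma linear_pd_Cons: "smooth f \<Longrightarrow> linear (\<lambda>v. pd f (v # vs) z)"
  using pd_has_derivative has_derivative_linear by blast

lemma pd_Cons_sum:
  "smooth f \<Longrightarrow> finite A \<Longrightarrow> pd f ((\<Sum>s\<in>A. w s) # vs) z = (\<Sum>s\<in>A. pd f (w s # vs) z)"
  using linear_sum[OF linear_pd_Cons] by (simp del: pd.simps)

lemma pd_Cons_scaleR: "smooth f \<Longrightarrow> pd f ((c *\<^sub>R v) # vs) z = c * pd f (v # vs) z"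
  using linear_scale[OF linear_pd_Cons] by (simp del: pd.simps)

lemma pd_Cons_add:
  assumes "smooth f"
  shows "pd f ((v + w) # vs) z = pd f (v # vs) z + pd f (w # vs) z"
  using linear_add[OF linear_pd_Cons[OF assms]] by (simp del: pd.simps)

lemma pd_Cons_Basis_expansion:
  fixes f :: "'a::euclidean_space \<Rightarrow> real"
  assumes "smooth f"
  shows "pd f (v # vs) z = (\<Sum>b\<in>Basis. (v \<bullet> b) * pd f (b # vs) z)"
  using pd_Cons_sum[OF assms, of Basis "\<lambda>b. (v \<bullet> b) *\<^sub>R b"] pd_Cons_scaleR[OF assms]
  by (simp del: pd.simps add: euclidean_representation)

lemma pd_two_sums:
  assumes "smooth f" "finite A"
  shows "pd f [v, \<Sum>s\<in>A. w s] z = (\<Sum>s\<in>A. pd f [v, w s] z)"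
proof -
  have "pd f [\<Sum>s\<in>A. w s] = (\<lambda>z. \<Sum>s\<in>A. pd f [w s] z)"
    using pd_Cons_sum[OF assms, of w "[]"] by (intro ext) simp
  moreover have "((\<lambda>z. \<Sum>s\<in>A. pd f [w s] z) has_derivative (\<lambda>v. \<Sum>s\<in>A. pd f [v, w s] z)) (at z)"
    by (intro has_derivative_sum pd_has_derivative[OF assms(1)])
  ultimately show ?thesis
    by (simp add: frechet_derivative_at[symmetric])
qed

lemma pd_has_real_derivative_line:
  assumes "smooth f"
  shows "((\<lambda>t. pd f vs (z + t *\<^sub>R y)) has_real_derivative pd f (y # vs) (z + t *\<^sub>R y)) (at t)"
proof -
  have "((\<lambda>t. z + t *\<^sub>R y) has_derivative (\<lambda>h. h *\<^sub>R y)) (at t)"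
    by (auto intro!: derivative_eq_intros)
  from has_derivative_compose[OF this pd_has_derivative[OF assms]]
  have "((\<lambda>t. pd f vs (z + t *\<^sub>R y)) has_derivative (\<lambda>h. pd f (y # vs) (z + t *\<^sub>R y) * h)) (at t)"
    by (simp del: pd.simps add: o_def pd_Cons_scaleR[OF assms] mult.commute)
  then show ?thesis
    by (simp add: has_field_derivative_def)
qed

lemma abs_sum_Basis_inner_le:
  fixes y :: "'a::euclidean_space" and C :: real
  assumes "\<And>b. b \<in> Basis \<Longrightarrow> \<bar>g b\<bar> \<le> C"
  shows "\<bar>\<Sum>b\<in>Basis. (y \<bullet> b) * g b\<bar> \<le> DIM('a) * C * norm y"
proof -
  have "\<bar>\<Sum>b\<in>Basis. (y \<bullet> b) * g b\<bar> \<le> (\<Sum>b\<in>Basis. \<bar>y \<bullet> b\<bar> * \<bar>g b\<bar>)"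
    using sum_abs[of "\<lambda>b. (y \<bullet> b) * g b" Basis] by (simp add: abs_mult)
  also have "\<dots> \<le> (\<Sum>b\<in>(Basis::'a set). norm y * C)"
  proof (rule sum_mono)
    fix b :: 'a
    assume "b \<in> Basis"
    then show "\<bar>y \<bullet> b\<bar> * \<bar>g b\<bar> \<le> norm y * C"
      using assms[of b] by (intro mult_mono Basis_le_norm) auto
  qed
  finally show ?thesis
    by (simp add: mult_ac)
qed

lemma pd_bounded_cball:
  fixes f :: "'a::euclidean_space \<Rightarrow> real"
  assumes "smooth f" "finite A"
  shows "\<exists>C\<ge>0. \<forall>vs\<in>A. \<forall>x\<in>cball 0 1. \<bar>pd f vs x\<bar> \<le> C"
proof -
  define g where "g x = (\<Sum>vs\<in>A. \<bar>pd f vs x\<bar>)" for x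
  have "isCont (pd f vs) x" for vs x
    using assms(1) differentiable_imp_continuous_within unfolding smooth_def by blast
  then have "continuous_on (cball 0 1) g"
    unfolding g_def by (intro continuous_intros continuous_at_imp_continuous_on) auto
  moreover have "cball (0::'a) 1 \<noteq> {}"
    by simp
  ultimately obtain x0 where x0: "\<And>x. x \<in> cball 0 1 \<Longrightarrow> g x \<le> g x0"
    using continuous_attains_sup[OF compact_cball] by blast
  have "\<bar>pd f vs x\<bar> \<le> g x0" if "vs \<in> A" "x \<in> cball 0 1" for vs x
  proof -
    have "\<bar>pd f vs x\<bar> \<le> g x"
      unfolding g_def using member_le_sum[OF that(1), of "\<lambda>vs. \<bar>pd f vs x\<bar>", OF _ assms(2)] by simp
    also have "\<dots> \<le> g x0"
      using x0 that(2) .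
    finally show ?thesis .
  qed
  moreover have "g x0 \<ge> 0"
    unfolding g_def by (simp add: sum_nonneg)
  ultimately show ?thesis by blast
qed

lemma pd_mean_value_segment:
  assumes "smooth f"
  obtains t where "0 < t" "t < 1" "pd f vs y - pd f vs 0 = pd f (y # vs) (t *\<^sub>R y)"
proof -
  have "((\<lambda>t. pd f vs (t *\<^sub>R y)) has_real_derivative pd f (y # vs) (t *\<^sub>R y)) (at t)" for t
    using pd_has_real_derivative_line[OF assms, of vs 0 y t] by simp
  then have "\<exists>t>0. t < 1 \<and>
      pd f vs (1 *\<^sub>R y) - pd f vs (0 *\<^sub>R y) = (1 - 0) * pd f (y # vs) (t *\<^sub>R y)"
    by (intro MVT2) auto
  then show thesis
    using that by auto
qed

lemma pd_Cons_bounded_cball: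
  fixes f :: "'a::euclidean_space \<Rightarrow> real"
  assumes "smooth f" "finite A"
  shows "\<exists>M\<ge>0. \<forall>vs\<in>A. \<forall>x\<in>cball 0 1. \<forall>y. \<bar>pd f (y # vs) x\<bar> \<le> M * norm y"
proof -
  obtain C where "C \<ge> 0"
    and C: "\<And>ws x. ws \<in> (\<lambda>(b, vs). b # vs) ` (Basis \<times> A) \<Longrightarrow> x \<in> cball 0 1 \<Longrightarrow> \<bar>pd f ws x\<bar> \<le> C"
    using pd_bounded_cball[OF assms(1) finite_imageI[OF finite_cartesian_product[OF finite_Basis assms(2)]]]
    by blast
  have "\<bar>pd f (y # vs) x\<bar> \<le> DIM('a) * C * norm y" if "vs \<in> A" "x \<in> cball 0 1" for vs x y
    unfolding pd_Cons_Basis_expansion[OF assms(1), of y]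
  proof (rule abs_sum_Basis_inner_le)
    fix b :: 'a
    assume "b \<in> Basis"
    then have "b # vs \<in> (\<lambda>(b, vs). b # vs) ` (Basis \<times> A)"
      using that(1) by (intro image_eqI[where x="(b, vs)"]) auto
    then show "\<bar>pd f (b # vs) x\<bar> \<le> C"
      using C that(2) by blast
  qed
  then show ?thesis
    using \<open>C \<ge> 0\<close> by (intro exI[of _ "DIM('a) * C"]) auto
qed

lemma pd_lipschitz_at_0:
  fixes f :: "'a::euclidean_space \<Rightarrow> real"
  assumes "smooth f" "finite A"
  shows "\<exists>M\<ge>0. \<forall>vs\<in>A. \<forall>y. norm y \<le> 1 \<longrightarrow> \<bar>pd f vs y - pd f vs 0\<bar> \<le> M * norm y"
proof -
  obtain M where "M \<ge> 0" and M: "\<forall>vs\<in>A. \<forall>x\<in>cball 0 1. \<forall>y. \<bar>pd f (y # vs) x\<bar> \<le> M * norm y"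
    using pd_Cons_bounded_cball[OF assms] by blast
  have "\<bar>pd f vs y - pd f vs 0\<bar> \<le> M * norm y" if "vs \<in> A" "norm y \<le> 1" for vs y
  proof -
    obtain t where t: "0 < t" "t < 1" and eq: "pd f vs y - pd f vs 0 = pd f (y # vs) (t *\<^sub>R y)"
      using pd_mean_value_segment[OF assms(1)] .
    have "t *\<^sub>R y \<in> cball 0 1"
      using t that(2) by (simp add: mult_le_one)
    then show ?thesis
      unfolding eq using M that(1) by blast
  qed
  then show ?thesis
    using \<open>M \<ge> 0\<close> by blast
qed

lemma smooth_quadratic_remainder:
  fixes f :: "'a::euclidean_space \<Rightarrow> real"
  assumes "smooth f" "f 0 = 0"
  shows "\<exists>M\<ge>0. \<forall>y. norm y \<le> 1 \<longrightarrow> \<bar>f y - pd f [y] 0\<bar> \<le> M * (norm y)\<^sup>2"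
proof -
  obtain M where "M \<ge> 0"
    and M: "\<forall>vs\<in>(\<lambda>b. [b]) ` Basis. \<forall>y. norm y \<le> 1 \<longrightarrow> \<bar>pd f vs y - pd f vs 0\<bar> \<le> M * norm y"
    using pd_lipschitz_at_0[OF assms(1) finite_imageI[OF finite_Basis]] by blast
  have "\<bar>f y - pd f [y] 0\<bar> \<le> DIM('a) * (M * norm y) * norm y" if y: "norm y \<le> 1" for y
  proof -
    obtain t where t: "0 < t" "t < 1" and "pd f [] y - pd f [] 0 = pd f [y] (t *\<^sub>R y)"
      using pd_mean_value_segment[OF assms(1)] .
    then have eq: "f y = pd f [y] (t *\<^sub>R y)"
      using assms(2) by simp
    have ty: "norm (t *\<^sub>R y) \<le> norm y"
      using t by (simp add: mult_left_le_one_le)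
    have "\<bar>pd f [b] (t *\<^sub>R y) - pd f [b] 0\<bar> \<le> M * norm y" if "b \<in> Basis" for b
    proof -
      have "[b] \<in> (\<lambda>b. [b]) ` Basis" "norm (t *\<^sub>R y) \<le> 1"
        using that ty y by auto
      then have "\<bar>pd f [b] (t *\<^sub>R y) - pd f [b] 0\<bar> \<le> M * norm (t *\<^sub>R y)"
        using M by blast
      also have "\<dots> \<le> M * norm y"
        using ty \<open>M \<ge> 0\<close> by (rule mult_left_mono)
      finally show ?thesis .
    qed
    then have "\<bar>\<Sum>b\<in>Basis. (y \<bullet> b) * (pd f [b] (t *\<^sub>R y) - pd f [b] 0)\<bar> \<le> DIM('a) * (M * norm y) * norm y"
      by (rule abs_sum_Basis_inner_le)
    then show ?thesis
      by (simp add: eq pd_Cons_Basis_expansion[OF assms(1), of y "[]"] right_diff_distrib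
          sum_subtractf del: pd.simps)
  qed
  then show ?thesis
    using \<open>M \<ge> 0\<close> by (intro exI[of _ "DIM('a) * M"]) (auto simp: power2_eq_square mult_ac)
qed

section \<open>Perturbed quadratics\<close>

(* The second-order Taylor remainder of a function phi with |phi 0 - S eps^2| <= K eps^4,
   |phi' 0| <= K eps^2 and |phi'' x - 2 P| <= K (eps^2 + |x|). *)
definition model_error :: "real \<Rightarrow> real \<Rightarrow> real \<Rightarrow> real" where
  "model_error K \<epsilon> y = K * \<epsilon>^4 + K * \<epsilon>\<^sup>2 * y + K / 2 * (\<epsilon>\<^sup>2 + y) * y\<^sup>2"

definition near_model ::
  "real \<Rightarrow> real \<Rightarrow> real \<Rightarrow> real \<Rightarrow> real \<Rightarrow> (real \<Rightarrow> real) \<Rightarrow> (real \<Rightarrow> real) \<Rightarrow> bool" where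
  "near_model S P K r \<epsilon> \<phi> \<phi>' \<longleftrightarrow>
     (\<forall>x. (\<phi> has_real_derivative \<phi>' x) (at x)) \<and>
     (\<forall>x. \<bar>x\<bar> < r \<longrightarrow> \<bar>\<phi> x - (S * \<epsilon>\<^sup>2 + P * x\<^sup>2)\<bar> \<le> model_error K \<epsilon> \<bar>x\<bar> \<and>
                     \<bar>\<phi>' x - 2 * P * x\<bar> \<le> K * \<epsilon>\<^sup>2 + K * (\<epsilon>\<^sup>2 + \<bar>x\<bar>) * \<bar>x\<bar>)"

lemma near_model_of_derivatives:
  assumes D: "\<forall>m x. (D m has_real_derivative D (Suc m) x) (at x)"
    and D0: "\<bar>D 0 0 - S * \<epsilon>\<^sup>2\<bar> \<le> K * \<epsilon>^4" and D1: "\<bar>D 1 0\<bar> \<le> K * \<epsilon>\<^sup>2"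
    and D2: "\<And>x. \<bar>x\<bar> < r \<Longrightarrow> \<bar>D 2 x - 2 * P\<bar> \<le> K * (\<epsilon>\<^sup>2 + \<bar>x\<bar>)" and K: "K \<ge> 0"
  shows "near_model S P K r \<epsilon> (D 0) (D 1)"
proof -
  have D2': "\<bar>D 2 t - 2 * P\<bar> \<le> K * (\<epsilon>\<^sup>2 + \<bar>x\<bar>)" if "\<bar>t\<bar> \<le> \<bar>x\<bar>" "\<bar>x\<bar> < r" for t x
  proof -
    have "\<bar>D 2 t - 2 * P\<bar> \<le> K * (\<epsilon>\<^sup>2 + \<bar>t\<bar>)"
      using that by (intro D2) linarith
    also have "\<dots> \<le> K * (\<epsilon>\<^sup>2 + \<bar>x\<bar>)"
      using that(1) K by (intro mult_left_mono) auto
    finally show ?thesis .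
  qed
  have "\<bar>D 0 x - (S * \<epsilon>\<^sup>2 + P * x\<^sup>2)\<bar> \<le> model_error K \<epsilon> \<bar>x\<bar>" if x: "\<bar>x\<bar> < r" for x
  proof -
    obtain t where t: "\<bar>t\<bar> \<le> \<bar>x\<bar>" and eq: "D 0 x = (\<Sum>m<2. D m 0 / fact m * x ^ m) + D 2 t / fact 2 * x\<^sup>2"
      using Maclaurin_all_le[OF refl D] by blast
    have "D 0 x - (S * \<epsilon>\<^sup>2 + P * x\<^sup>2) = (D 0 0 - S * \<epsilon>\<^sup>2) + D 1 0 * x + (D 2 t - 2 * P) / 2 * x\<^sup>2"
      unfolding eq by (simp add: numeral_2_eq_2 field_simps)
    also have "\<bar>\<dots>\<bar> \<le> \<bar>D 0 0 - S * \<epsilon>\<^sup>2\<bar> + \<bar>D 1 0\<bar> * \<bar>x\<bar> + \<bar>D 2 t - 2 * P\<bar> / 2 * x\<^sup>2"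
      by (simp add: abs_mult abs_triangle_ineq order_trans[OF abs_triangle_ineq add_mono])
    also have "\<dots> \<le> model_error K \<epsilon> \<bar>x\<bar>"
      unfolding model_error_def using D0 D1 D2'[OF t x]
      by (intro add_mono mult_right_mono divide_right_mono) (auto intro: mult_right_mono)
    finally show ?thesis .
  qed
  moreover have "\<bar>D 1 x - 2 * P * x\<bar> \<le> K * \<epsilon>\<^sup>2 + K * (\<epsilon>\<^sup>2 + \<bar>x\<bar>) * \<bar>x\<bar>" if x: "\<bar>x\<bar> < r" for x
  proof -
    have "\<forall>m x. (D (Suc m) has_real_derivative D (Suc (Suc m)) x) (at x)"
      using D by blast
    from Maclaurin_all_le[OF refl this, of x 1]
    obtain t where t: "\<bar>t\<bar> \<le> \<bar>x\<bar>" and eq: "D 1 x = D 1 0 + D 2 t * x"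
      by (auto simp: numeral_2_eq_2)
    have "D 1 x - 2 * P * x = D 1 0 + (D 2 t - 2 * P) * x"
      unfolding eq by (simp add: algebra_simps)
    also have "\<bar>\<dots>\<bar> \<le> \<bar>D 1 0\<bar> + \<bar>D 2 t - 2 * P\<bar> * \<bar>x\<bar>"
      by (simp add: abs_mult order_trans[OF abs_triangle_ineq])
    also have "\<dots> \<le> K * \<epsilon>\<^sup>2 + K * (\<epsilon>\<^sup>2 + \<bar>x\<bar>) * \<bar>x\<bar>"
      using D1 D2'[OF t x] by (intro add_mono mult_right_mono) auto
    finally show ?thesis .
  qed
  ultimately show ?thesis
    unfolding near_model_def using D by (simp add: One_nat_def)
qed

lemma near_model_uminus:
  "near_model S P K r \<epsilon> \<phi> \<phi>' \<Longrightarrow> near_model (- S) (- P) K r \<epsilon> (\<lambda>x. - \<phi> x) (\<lambda>x. - \<phi>' x)"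
  unfolding near_model_def by (auto intro: DERIV_minus simp: abs_minus_commute[of "- _"] algebra_simps)

lemma near_model_reflect:
  "near_model S P K r \<epsilon> \<phi> \<phi>' \<Longrightarrow> near_model S P K r \<epsilon> (\<lambda>x. \<phi> (- x)) (\<lambda>x. - \<phi>' (- x))"
  unfolding near_model_def
  by (auto simp: DERIV_mirror algebra_simps abs_minus_commute[of "_ * x" for x]
      dest: spec[of _ "- _"])

lemma model_error_mono:
  assumes "K \<ge> 0" "0 \<le> y" "y \<le> z"
  shows "model_error K \<epsilon> y \<le> model_error K \<epsilon> z"
proof -
  have "y\<^sup>2 \<le> z\<^sup>2"
    using assms(3,2) by (rule power_mono)
  then show ?thesis
    unfolding model_error_def using assms by (intro add_mono mult_left_mono mult_mono) auto
qed

lemma model_error_at_multiple: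
  assumes "K \<ge> 0" "c \<ge> 0" "0 < \<epsilon>" "\<epsilon> \<le> 1"
  shows "model_error K \<epsilon> (c * \<epsilon>) \<le> K * (1 + c + c\<^sup>2 / 2 + c^3 / 2) * \<epsilon>^3"
proof -
  have "\<epsilon>^4 \<le> \<epsilon>^3"
    using assms(3,4) by (simp add: power_decreasing)
  then have "K * \<epsilon>^4 \<le> K * \<epsilon>^3" "K * c\<^sup>2 / 2 * \<epsilon>^4 \<le> K * c\<^sup>2 / 2 * \<epsilon>^3"
    using assms(1,2) by (auto intro!: mult_left_mono)
  moreover have "model_error K \<epsilon> (c * \<epsilon>) = K * \<epsilon>^4 + K * c * \<epsilon>^3 + K * c\<^sup>2 / 2 * \<epsilon>^4 + K * c^3 / 2 * \<epsilon>^3"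
    unfolding model_error_def by (simp add: power2_eq_square power3_eq_cube power4_eq_xxxx field_simps)
  ultimately show ?thesis
    by (simp add: algebra_simps)
qed

lemma mult_le_if_le_divide_plus_one:
  fixes K \<epsilon> B :: real
  assumes "K \<ge> 0" "\<epsilon> \<ge> 0" "\<epsilon> \<le> B / (K + 1)"
  shows "K * \<epsilon> \<le> B"
proof -
  have "(K + 1) * \<epsilon> \<le> B"
    using assms by (simp add: field_simps)
  then show ?thesis
    using assms(2) by (simp add: algebra_simps)
qed

lemma near_model_positive_near_0:
  assumes S: "S > 0" and P: "P > 0" and K: "K \<ge> 0" and r: "r > 0"
  shows "\<exists>\<delta>>0. \<forall>\<epsilon> \<phi> \<phi>'. 0 < \<epsilon> \<and> \<epsilon> < \<delta> \<and> near_model S P K r \<epsilon> \<phi> \<phi>' \<longrightarrow>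
           (\<forall>x. \<bar>x\<bar> < \<delta> \<longrightarrow> \<phi> x > 0)"
proof -
  define \<delta> where "\<delta> = min r (min 1 (min S P / (4 * (K + 1))))"
  have \<delta>: "\<delta> > 0" "\<delta> \<le> r" "\<delta> \<le> 1"
    using S P K r by (auto simp: \<delta>_def)
  have "\<delta> \<le> (min S P / 4) / (K + 1)"
    unfolding \<delta>_def by (simp add: divide_divide_eq_left min_le_iff_disj)
  then have "K * \<delta> \<le> min S P / 4"
    using K \<delta>(1) by (intro mult_le_if_le_divide_plus_one) auto
  then have K\<delta>: "K * \<delta> \<le> S / 4" "K * \<delta> \<le> P / 4"
    by auto
  have "\<phi> x > 0" if \<epsilon>: "0 < \<epsilon>" "\<epsilon> < \<delta>" and model: "near_model S P K r \<epsilon> \<phi> \<phi>'" and x: "\<bar>x\<bar> < \<delta>"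
    for \<epsilon> \<phi> \<phi>' x
  proof -
    have "\<epsilon>\<^sup>2 \<le> \<epsilon>"
      using \<epsilon> \<delta>(3) by (simp add: power2_eq_square mult_left_le_one_le)
    then have \<epsilon>2: "\<epsilon>\<^sup>2 \<le> \<delta>"
      using \<epsilon> by linarith
    have "K * \<epsilon>\<^sup>2 \<le> S / 4"
      using mult_left_mono[OF \<epsilon>2 K] K\<delta> by linarith
    then have t1: "K * \<epsilon>\<^sup>2 * \<epsilon>\<^sup>2 \<le> S / 4 * \<epsilon>\<^sup>2"
      by (rule mult_right_mono) simp
    have "K * \<bar>x\<bar> \<le> S / 4"
      using mult_left_mono[of "\<bar>x\<bar>" \<delta> K] x K K\<delta> by linarith
    then have t2: "K * \<bar>x\<bar> * \<epsilon>\<^sup>2 \<le> S / 4 * \<epsilon>\<^sup>2"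
      by (rule mult_right_mono) simp
    have "K / 2 * (\<epsilon>\<^sup>2 + \<bar>x\<bar>) \<le> K / 2 * (2 * \<delta>)"
      using x \<epsilon>2 K by (intro mult_left_mono) auto
    then have t3: "K / 2 * (\<epsilon>\<^sup>2 + \<bar>x\<bar>) * x\<^sup>2 \<le> P / 4 * x\<^sup>2"
      using K\<delta> by (intro mult_right_mono) auto
    have "\<bar>\<phi> x - (S * \<epsilon>\<^sup>2 + P * x\<^sup>2)\<bar> \<le> model_error K \<epsilon> \<bar>x\<bar>"
      using model x \<delta> unfolding near_model_def by auto
    moreover have "model_error K \<epsilon> \<bar>x\<bar> = K * \<epsilon>\<^sup>2 * \<epsilon>\<^sup>2 + K * \<bar>x\<bar> * \<epsilon>\<^sup>2 + K / 2 * (\<epsilon>\<^sup>2 + \<bar>x\<bar>) * x\<^sup>2"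
      unfolding model_error_def by (simp add: power4_eq_xxxx power2_eq_square mult_ac)
    moreover have "0 < S / 2 * \<epsilon>\<^sup>2" "0 \<le> P / 2 * x\<^sup>2"
      using S P \<epsilon> by auto
    ultimately show ?thesis
      using t1 t2 t3 by linarith
  qed
  then show ?thesis
    using \<delta>(1) by blast
qed

lemma near_model_nonvanishing:
  assumes SP: "S / P > 0" and K: "K \<ge> 0" and r: "r > 0"
  shows "\<exists>\<delta>>0. \<forall>\<epsilon> \<phi> \<phi>'. 0 < \<epsilon> \<and> \<epsilon> < \<delta> \<and> near_model S P K r \<epsilon> \<phi> \<phi>' \<longrightarrow>
           (\<forall>x. \<bar>x\<bar> < \<delta> \<longrightarrow> \<phi> x \<noteq> 0)"
proof (cases "S > 0")
  case True
  then have "P > 0"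
    using SP by (simp add: zero_less_divide_iff)
  with True show ?thesis
    using near_model_positive_near_0[OF _ _ K r] by (metis less_irrefl)
next
  case False
  then have "- S > 0" "- P > 0"
    using SP by (auto simp: zero_less_divide_iff)
  from near_model_positive_near_0[OF this K r] obtain \<delta> where "\<delta> > 0"
    and \<delta>: "\<And>\<epsilon> \<phi> \<phi>' x. 0 < \<epsilon> \<Longrightarrow> \<epsilon> < \<delta> \<Longrightarrow> near_model (- S) (- P) K r \<epsilon> \<phi> \<phi>' \<Longrightarrow> \<bar>x\<bar> < \<delta> \<Longrightarrow> \<phi> x > 0"
    by blast
  have "\<phi> x \<noteq> 0" if "0 < \<epsilon>" "\<epsilon> < \<delta>" "near_model S P K r \<epsilon> \<phi> \<phi>'" "\<bar>x\<bar> < \<delta>"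
    for \<epsilon> \<phi> \<phi>' x
    using \<delta>[OF that(1,2) near_model_uminus[OF that(3)] that(4)] by simp
  then show ?thesis
    using \<open>\<delta> > 0\<close> by blast
qed

lemma unique_zero_by_signs:
  fixes \<phi> \<phi>' :: "real \<Rightarrow> real"
  assumes "lo < a" "a < b" "b < hi"
    and der: "\<And>x. (\<phi> has_real_derivative \<phi>' x) (at x)"
    and neg: "\<And>x. lo < x \<Longrightarrow> x \<le> a \<Longrightarrow> \<phi> x < 0"
    and pos: "\<And>x. b \<le> x \<Longrightarrow> x < hi \<Longrightarrow> \<phi> x > 0"
    and incr: "\<And>x. a \<le> x \<Longrightarrow> x \<le> b \<Longrightarrow> \<phi>' x > 0"
  shows "\<exists>!x. lo < x \<and> x < hi \<and> \<phi> x = 0"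
proof (rule ex_ex1I)
  have "isCont \<phi> x" for x
    using der by (rule DERIV_isCont)
  then have "\<exists>x\<ge>a. x \<le> b \<and> \<phi> x = 0"
    using IVT[of \<phi> a 0 b] neg[of a] pos[of b] assms(1-3) by auto
  then show "\<exists>x. lo < x \<and> x < hi \<and> \<phi> x = 0"
    using assms(1-3) by (metis le_less_trans less_le_trans)
next
  have between: "a < x \<and> x < b" if "lo < x" "x < hi" "\<phi> x = 0" for x
    using neg[of x] pos[of x] that by force
  have "strict_mono_on {a..b} \<phi>"
    by (rule strict_mono_onI, rule DERIV_pos_imp_increasing[where f=\<phi>])
       (use der incr in \<open>auto intro!: exI\<close>)
  then show "x = y" if "lo < x \<and> x < hi \<and> \<phi> x = 0" "lo < y \<and> y < hi \<and> \<phi> y = 0" for x y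
    using between[of x] between[of y] that
    by (metis atLeastAtMost_iff less_imp_le not_less_iff_gr_or_eq strict_mono_onD)
qed

lemma root_error_bound:
  fixes P d \<epsilon> x A :: real
  assumes "P > 0" "d > 0" "\<epsilon> > 0" "x > 0" "\<bar>P * x\<^sup>2 - P * d\<^sup>2 * \<epsilon>\<^sup>2\<bar> \<le> A * \<epsilon>^3"
  shows "\<bar>x - d * \<epsilon>\<bar> \<le> A / (P * d) * \<epsilon>\<^sup>2"
proof -
  have "P * (d * \<epsilon>) * \<bar>x - d * \<epsilon>\<bar> \<le> P * (x + d * \<epsilon>) * \<bar>x - d * \<epsilon>\<bar>"
    using assms by (intro mult_right_mono) auto
  also have "\<dots> = \<bar>P * (x + d * \<epsilon>) * (x - d * \<epsilon>)\<bar>"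
    using assms by (simp add: abs_mult)
  also have "\<dots> = \<bar>P * x\<^sup>2 - P * d\<^sup>2 * \<epsilon>\<^sup>2\<bar>"
    by (simp add: power2_eq_square algebra_simps)
  finally have "(P * d) * \<epsilon> * \<bar>x - d * \<epsilon>\<bar> \<le> A * \<epsilon>^3"
    using assms(5) by (simp add: mult_ac)
  then show ?thesis
    using assms by (simp add: field_simps power2_eq_square power3_eq_cube)
qed

lemma near_model_negative_below_root:
  assumes P: "P > 0" and d: "d > 0" and Pd2: "P * d\<^sup>2 = - S" and K: "K \<ge> 0"
    and \<epsilon>: "0 < \<epsilon>" "\<epsilon> \<le> 1" and small: "K * (1 + d / 2 + (d / 2)\<^sup>2 / 2 + (d / 2)^3 / 2) * \<epsilon> \<le> - S / 4"
    and model: "near_model S P K r \<epsilon> \<phi> \<phi>'" and x: "0 \<le> x" "x \<le> d * \<epsilon> / 2" "x < r"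
  shows "\<phi> x < 0"
proof -
  have "model_error K \<epsilon> \<bar>x\<bar> \<le> model_error K \<epsilon> (d / 2 * \<epsilon>)"
    using x K by (intro model_error_mono) auto
  also have "\<dots> \<le> K * (1 + d / 2 + (d / 2)\<^sup>2 / 2 + (d / 2)^3 / 2) * \<epsilon> * \<epsilon>\<^sup>2"
    using model_error_at_multiple[OF K _ \<epsilon>, of "d / 2"] d
    by (simp add: power2_eq_square power3_eq_cube mult_ac)
  also have "\<dots> \<le> - S / 4 * \<epsilon>\<^sup>2"
    using small by (intro mult_right_mono) auto
  finally have err: "model_error K \<epsilon> \<bar>x\<bar> \<le> - S / 4 * \<epsilon>\<^sup>2" .
  have "P * x\<^sup>2 \<le> P * (d * \<epsilon> / 2)\<^sup>2"
    using x P by (intro mult_left_mono power_mono) auto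
  also have "\<dots> = (P * d\<^sup>2) / 4 * \<epsilon>\<^sup>2"
    by (simp add: power_mult_distrib power_divide)
  finally have "P * x\<^sup>2 \<le> - S / 4 * \<epsilon>\<^sup>2"
    using Pd2 by simp
  moreover have "\<bar>x\<bar> < r"
    using x by simp
  then have "\<bar>\<phi> x - (S * \<epsilon>\<^sup>2 + P * x\<^sup>2)\<bar> \<le> model_error K \<epsilon> \<bar>x\<bar>"
    using model unfolding near_model_def by blast
  moreover have "0 < - S * \<epsilon>\<^sup>2"
    using P d Pd2 \<epsilon>(1) by (simp flip: Pd2)
  ultimately show ?thesis
    using err by linarith
qed

lemma near_model_positive_above_root:
  assumes P: "P > 0" and d: "d > 0" and Pd2: "P * d\<^sup>2 = - S" and K: "K \<ge> 0"
    and \<epsilon>: "0 < \<epsilon>" "\<epsilon> \<le> \<delta>" "\<delta> \<le> 1"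
    and small: "K * \<epsilon> \<le> - S / 2" "K * \<epsilon> \<le> P * d / 2" "K * \<delta> \<le> P / 4"
    and model: "near_model S P K r \<epsilon> \<phi> \<phi>'" and x: "2 * d * \<epsilon> \<le> x" "x < \<delta>" "\<delta> \<le> r"
  shows "\<phi> x > 0"
proof -
  have "0 < d * \<epsilon>"
    using d \<epsilon>(1) by simp
  then have "0 < x" "\<bar>x\<bar> < r"
    using x by auto
  have "\<epsilon>\<^sup>2 \<le> \<epsilon>"
    using \<epsilon> by (simp add: power2_eq_square mult_left_le_one_le)
  have "K * \<epsilon>\<^sup>2 * \<epsilon>\<^sup>2 \<le> - S / 2 * \<epsilon>\<^sup>2"
    using mult_left_mono[OF \<open>\<epsilon>\<^sup>2 \<le> \<epsilon>\<close> K] small(1) by (intro mult_right_mono) auto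
  moreover have "K * \<epsilon>\<^sup>2 * x \<le> P / 4 * x\<^sup>2"
  proof -
    have "K * \<epsilon>\<^sup>2 = (K * \<epsilon>) * \<epsilon>"
      by (simp add: power2_eq_square)
    also have "\<dots> \<le> (P * d / 2) * \<epsilon>"
      using small(2) \<epsilon>(1) by (intro mult_right_mono) auto
    also have "\<dots> = P / 4 * (2 * d * \<epsilon>)"
      by simp
    also have "\<dots> \<le> P / 4 * x"
      using x P by (intro mult_left_mono) auto
    finally show ?thesis
      using \<open>0 < x\<close> by (simp add: power2_eq_square mult_right_mono mult.assoc[symmetric])
  qed
  moreover have "K / 2 * (\<epsilon>\<^sup>2 + x) * x\<^sup>2 \<le> P / 4 * x\<^sup>2"
    using mult_left_mono[of "\<epsilon>\<^sup>2 + x" "2 * \<delta>" "K / 2"] \<open>\<epsilon>\<^sup>2 \<le> \<epsilon>\<close> \<epsilon> x K small(3)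
    by (intro mult_right_mono) auto
  moreover have "- 4 * S * \<epsilon>\<^sup>2 \<le> P * x\<^sup>2"
  proof -
    have "(2 * d * \<epsilon>)\<^sup>2 \<le> x\<^sup>2"
      using x(1) d \<epsilon>(1) by (intro power_mono) auto
    then have "P * (2 * d * \<epsilon>)\<^sup>2 \<le> P * x\<^sup>2"
      using P by simp
    moreover have "P * (2 * d * \<epsilon>)\<^sup>2 = 4 * (P * d\<^sup>2) * \<epsilon>\<^sup>2"
      by (simp add: power_mult_distrib)
    ultimately show ?thesis
      using Pd2 by simp
  qed
  moreover have "0 < - S * \<epsilon>\<^sup>2"
    using P d Pd2 \<epsilon>(1) by (simp flip: Pd2)
  moreover have "model_error K \<epsilon> \<bar>x\<bar> = K * \<epsilon>\<^sup>2 * \<epsilon>\<^sup>2 + K * \<epsilon>\<^sup>2 * x + K / 2 * (\<epsilon>\<^sup>2 + x) * x\<^sup>2"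
    using \<open>0 < x\<close> by (simp add: model_error_def power4_eq_xxxx power2_eq_square)
  moreover have "\<bar>\<phi> x - (S * \<epsilon>\<^sup>2 + P * x\<^sup>2)\<bar> \<le> model_error K \<epsilon> \<bar>x\<bar>"
    using model \<open>\<bar>x\<bar> < r\<close> unfolding near_model_def by auto
  ultimately show ?thesis
    by linarith
qed

lemma near_model_increasing_near_root:
  assumes P: "P > 0" and d: "d > 0" and K: "K \<ge> 0"
    and \<epsilon>: "0 < \<epsilon>" "\<epsilon> \<le> \<delta>" "\<delta> \<le> 1" and small: "K * \<epsilon> \<le> P * d / 2" "K * \<delta> \<le> P / 4"
    and model: "near_model S P K r \<epsilon> \<phi> \<phi>'" and x: "d * \<epsilon> / 2 \<le> x" "x \<le> \<delta> / 2" "\<delta> \<le> r"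
  shows "\<phi>' x > 0"
proof -
  have "0 < d * \<epsilon>"
    using d \<epsilon>(1) by simp
  then have "0 < x" "\<bar>x\<bar> < r"
    using x \<epsilon> by auto
  have "\<epsilon>\<^sup>2 \<le> \<epsilon>"
    using \<epsilon> by (simp add: power2_eq_square mult_left_le_one_le)
  then have "\<epsilon>\<^sup>2 + x \<le> 2 * \<delta>"
    using \<epsilon> x by linarith
  then have "K * (\<epsilon>\<^sup>2 + x) \<le> K * (2 * \<delta>)"
    using K by (rule mult_left_mono)
  then have "K * (\<epsilon>\<^sup>2 + x) \<le> P / 2"
    using small(2) by linarith
  then have "K * (\<epsilon>\<^sup>2 + x) * x \<le> P / 2 * x"
    using \<open>0 < x\<close> by (intro mult_right_mono) auto
  moreover have "K * \<epsilon>\<^sup>2 \<le> P * d / 2 * \<epsilon>"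
    using small(1) \<epsilon>(1) by (simp add: power2_eq_square mult_right_mono mult.assoc[symmetric])
  moreover have "P * (d * \<epsilon> / 2) \<le> P * x"
    using x P by (intro mult_left_mono) auto
  moreover have "\<bar>\<phi>' x - 2 * P * x\<bar> \<le> K * \<epsilon>\<^sup>2 + K * (\<epsilon>\<^sup>2 + \<bar>x\<bar>) * \<bar>x\<bar>"
    using model \<open>\<bar>x\<bar> < r\<close> unfolding near_model_def by auto
  moreover have "0 < P * d * \<epsilon>"
    using P \<open>0 < d * \<epsilon>\<close> by (simp add: mult.assoc)
  ultimately show ?thesis
    using \<open>0 < x\<close> by (simp add: algebra_simps)
qed

lemma near_model_unique_positive_root:
  assumes P: "P > 0" and d: "d > 0" and Pd2: "P * d\<^sup>2 = - S" and K: "K \<ge> 0"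
    and \<delta>: "0 < \<delta>" "\<delta> \<le> r" "\<delta> \<le> 1" "K * \<delta> \<le> P / 4"
    and \<epsilon>: "0 < \<epsilon>" "\<epsilon> \<le> \<delta>" "4 * d * \<epsilon> \<le> \<delta>"
    and small: "K * (1 + d / 2 + (d / 2)\<^sup>2 / 2 + (d / 2)^3 / 2) * \<epsilon> \<le> - S / 4"
      "K * \<epsilon> \<le> - S / 2" "K * \<epsilon> \<le> P * d / 2"
    and model: "near_model S P K r \<epsilon> \<phi> \<phi>'"
  defines "A \<equiv> K * (1 + 2 * d + (2 * d)\<^sup>2 / 2 + (2 * d)^3 / 2)"
  shows "\<phi> 0 < 0 \<and> (\<exists>!x. 0 < x \<and> x < \<delta> \<and> \<phi> x = 0) \<and>
    (\<forall>x. 0 < x \<and> x < \<delta> \<and> \<phi> x = 0 \<longrightarrow> \<bar>x - d * \<epsilon>\<bar> \<le> A / (P * d) * \<epsilon>\<^sup>2)"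
proof -
  have d\<epsilon>: "0 < d * \<epsilon>" "2 * d * \<epsilon> \<le> \<delta> / 2"
    using d \<epsilon> by auto
  have neg: "\<phi> x < 0" if "0 \<le> x" "x \<le> d * \<epsilon> / 2" for x
    using that d\<epsilon> \<delta> \<epsilon>(2)
    by (intro near_model_negative_below_root[OF P d Pd2 K \<epsilon>(1) _ small(1) model]) linarith+
  have pos: "\<phi> x > 0" if "2 * d * \<epsilon> \<le> x" "x < \<delta>" for x
    using near_model_positive_above_root[OF P d Pd2 K \<epsilon>(1,2) \<delta>(3) small(2,3) \<delta>(4) model that \<delta>(2)] .
  have incr: "\<phi>' x > 0" if "d * \<epsilon> / 2 \<le> x" "x \<le> 2 * d * \<epsilon>" for x
    using near_model_increasing_near_root[OF P d K \<epsilon>(1,2) \<delta>(3) small(3) \<delta>(4) model that(1) _ \<delta>(2)]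
      that(2) d\<epsilon> by linarith
  have zero_between: "d * \<epsilon> / 2 < x \<and> x < 2 * d * \<epsilon>" if "0 < x" "x < \<delta>" "\<phi> x = 0" for x
    using neg[of x] pos[of x] that by force
  have "\<exists>!x. 0 < x \<and> x < \<delta> \<and> \<phi> x = 0"
  proof (rule unique_zero_by_signs[OF _ _ _ _ _ pos incr])
    show "0 < d * \<epsilon> / 2" "d * \<epsilon> / 2 < 2 * d * \<epsilon>" "2 * d * \<epsilon> < \<delta>"
      using d\<epsilon> \<delta>(1) by (auto simp: mult.commute)
    show "(\<phi> has_real_derivative \<phi>' x) (at x)" for x
      using model by (simp add: near_model_def)
  qed (use neg in auto)
  moreover have "\<bar>x - d * \<epsilon>\<bar> \<le> A / (P * d) * \<epsilon>\<^sup>2" if "0 < x" "x < \<delta>" "\<phi> x = 0" for x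
  proof (rule root_error_bound[OF P d \<epsilon>(1) \<open>0 < x\<close>])
    have "\<bar>x\<bar> < r"
      using that \<delta> by simp
    then have "\<bar>\<phi> x - (S * \<epsilon>\<^sup>2 + P * x\<^sup>2)\<bar> \<le> model_error K \<epsilon> \<bar>x\<bar>"
      using model unfolding near_model_def by blast
    then have "\<bar>S * \<epsilon>\<^sup>2 + P * x\<^sup>2\<bar> \<le> model_error K \<epsilon> \<bar>x\<bar>"
      using that(3) by simp
    also have "\<dots> \<le> model_error K \<epsilon> (2 * d * \<epsilon>)"
      using zero_between[OF that] K by (intro model_error_mono) auto
    also have "\<dots> \<le> A * \<epsilon>^3"
      using model_error_at_multiple[OF K _ \<epsilon>(1), of "2 * d"] d \<epsilon>(2) \<delta>(3) by (simp add: A_def)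
    finally show "\<bar>P * x\<^sup>2 - P * d\<^sup>2 * \<epsilon>\<^sup>2\<bar> \<le> A * \<epsilon>^3"
      using Pd2 by (simp add: algebra_simps)
  qed
  ultimately show ?thesis
    using neg[of 0] d\<epsilon> by auto
qed

lemma near_model_positive_root:
  assumes S: "S < 0" and P: "P > 0" and K: "K \<ge> 0" and r: "r > 0"
  shows "\<exists>\<delta>>0. \<exists>\<epsilon>\<^sub>0>0. \<exists>C. \<forall>\<epsilon> \<phi> \<phi>'. 0 < \<epsilon> \<and> \<epsilon> < \<epsilon>\<^sub>0 \<and> near_model S P K r \<epsilon> \<phi> \<phi>' \<longrightarrow>
           \<phi> 0 < 0 \<and> (\<exists>!x. 0 < x \<and> x < \<delta> \<and> \<phi> x = 0) \<and>
           (\<forall>x. 0 < x \<and> x < \<delta> \<and> \<phi> x = 0 \<longrightarrow> \<bar>x - sqrt (- S / P) * \<epsilon>\<bar> \<le> C * \<epsilon>\<^sup>2)"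
proof -
  define d where "d = sqrt (- S / P)"
  have "- S / P > 0"
    using S P by (simp add: divide_neg_pos)
  then have d: "d > 0" and "d\<^sup>2 = - S / P"
    unfolding d_def by auto
  then have Pd2: "P * d\<^sup>2 = - S"
    using P by simp
  define \<delta> where "\<delta> = min r (min 1 (P / 4 / (K + 1)))"
  have \<delta>: "\<delta> > 0" "\<delta> \<le> r" "\<delta> \<le> 1"
    using P K r by (auto simp: \<delta>_def)
  have K\<delta>: "K * \<delta> \<le> P / 4"
    using K \<delta>(1) by (intro mult_le_if_le_divide_plus_one) (auto simp: \<delta>_def)
  define A\<^sub>1 where "A\<^sub>1 = K * (1 + d / 2 + (d / 2)\<^sup>2 / 2 + (d / 2)^3 / 2)"
  define A\<^sub>2 where "A\<^sub>2 = K * (1 + 2 * d + (2 * d)\<^sup>2 / 2 + (2 * d)^3 / 2)"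
  have A\<^sub>1: "A\<^sub>1 \<ge> 0"
    using K d by (simp add: A\<^sub>1_def)
  define \<epsilon>\<^sub>0 where "\<epsilon>\<^sub>0 = min \<delta> (min (\<delta> / (4 * d))
      (min (- S / 4 / (A\<^sub>1 + 1)) (min (- S / 2 / (K + 1)) (P * d / 2 / (K + 1)))))"
  have "\<epsilon>\<^sub>0 > 0"
    using \<delta> d S P K A\<^sub>1 by (simp add: \<epsilon>\<^sub>0_def divide_neg_pos)
  have main: "\<phi> 0 < 0 \<and> (\<exists>!x. 0 < x \<and> x < \<delta> \<and> \<phi> x = 0) \<and>
      (\<forall>x. 0 < x \<and> x < \<delta> \<and> \<phi> x = 0 \<longrightarrow> \<bar>x - d * \<epsilon>\<bar> \<le> A\<^sub>2 / (P * d) * \<epsilon>\<^sup>2)"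
    if \<epsilon>: "0 < \<epsilon>" "\<epsilon> < \<epsilon>\<^sub>0" and model: "near_model S P K r \<epsilon> \<phi> \<phi>'" for \<epsilon> \<phi> \<phi>'
  proof -
    have "\<epsilon> \<le> \<delta>" "\<epsilon> \<le> \<delta> / (4 * d)"
      using \<epsilon> unfolding \<epsilon>\<^sub>0_def by auto
    then have "4 * d * \<epsilon> \<le> \<delta>"
      using d by (auto simp: pos_le_divide_eq mult.commute)
    have "\<epsilon> \<le> - S / 4 / (A\<^sub>1 + 1)" "\<epsilon> \<le> - S / 2 / (K + 1)" "\<epsilon> \<le> P * d / 2 / (K + 1)"
      using \<epsilon> unfolding \<epsilon>\<^sub>0_def by auto
    then have "A\<^sub>1 * \<epsilon> \<le> - S / 4" "K * \<epsilon> \<le> - S / 2" "K * \<epsilon> \<le> P * d / 2"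
      using A\<^sub>1 K \<epsilon>(1) by (meson less_imp_le mult_le_if_le_divide_plus_one)+
    then show ?thesis
      unfolding A\<^sub>2_def using near_model_unique_positive_root[OF P d Pd2 K \<delta> K\<delta> \<epsilon>(1) \<open>\<epsilon> \<le> \<delta>\<close>
          \<open>4 * d * \<epsilon> \<le> \<delta>\<close> _ _ _ model]
      by (simp add: A\<^sub>1_def)
  qed
  show ?thesis
    unfolding d_def[symmetric]
    by (rule exI[of _ \<delta>], rule conjI[OF \<delta>(1)], rule exI[of _ \<epsilon>\<^sub>0], rule conjI[OF \<open>\<epsilon>\<^sub>0 > 0\<close>],
        rule exI[of _ "A\<^sub>2 / (P * d)"], intro allI impI, elim conjE, rule main; assumption)
qed

definition root_pair :: "real \<Rightarrow> real \<Rightarrow> real \<Rightarrow> real \<Rightarrow> (real \<Rightarrow> real) \<Rightarrow> bool" where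
  "root_pair D C \<delta> \<epsilon> \<phi> \<longleftrightarrow> (\<exists>xp xm. \<phi> xp = 0 \<and> \<phi> xm = 0 \<and>
     \<bar>xp - D * \<epsilon>\<bar> \<le> C * \<epsilon>\<^sup>2 \<and> \<bar>xm + D * \<epsilon>\<bar> \<le> C * \<epsilon>\<^sup>2 \<and>
     (\<forall>x. \<bar>x\<bar> < \<delta> \<and> \<phi> x = 0 \<longrightarrow> x = xp \<or> x = xm))"

lemma near_model_two_roots_pos:
  assumes S: "S < 0" and P: "P > 0" and K: "K \<ge> 0" and r: "r > 0"
  shows "\<exists>\<delta>>0. \<exists>\<epsilon>\<^sub>0>0. \<exists>C. \<forall>\<epsilon> \<phi> \<phi>'. 0 < \<epsilon> \<and> \<epsilon> < \<epsilon>\<^sub>0 \<and> near_model S P K r \<epsilon> \<phi> \<phi>' \<longrightarrow>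
           root_pair (sqrt (- S / P)) C \<delta> \<epsilon> \<phi>"
proof -
  from near_model_positive_root[OF S P K r] obtain \<delta> \<epsilon>\<^sub>0 C where "\<delta> > 0" "\<epsilon>\<^sub>0 > 0"
    and roots: "\<forall>\<epsilon> \<phi> \<phi>'. 0 < \<epsilon> \<and> \<epsilon> < \<epsilon>\<^sub>0 \<and> near_model S P K r \<epsilon> \<phi> \<phi>' \<longrightarrow>
      \<phi> 0 < 0 \<and> (\<exists>!x. 0 < x \<and> x < \<delta> \<and> \<phi> x = 0) \<and>
      (\<forall>x. 0 < x \<and> x < \<delta> \<and> \<phi> x = 0 \<longrightarrow> \<bar>x - sqrt (- S / P) * \<epsilon>\<bar> \<le> C * \<epsilon>\<^sup>2)"
    by (elim exE conjE)
  have root: "\<phi> 0 < 0 \<and> (\<exists>!x. 0 < x \<and> x < \<delta> \<and> \<phi> x = 0) \<and>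
      (\<forall>x. 0 < x \<and> x < \<delta> \<and> \<phi> x = 0 \<longrightarrow> \<bar>x - sqrt (- S / P) * \<epsilon>\<bar> \<le> C * \<epsilon>\<^sup>2)"
    if "0 < \<epsilon>" "\<epsilon> < \<epsilon>\<^sub>0" "near_model S P K r \<epsilon> \<phi> \<phi>'" for \<epsilon> \<phi> \<phi>'
    using roots that by blast
  have "root_pair (sqrt (- S / P)) C \<delta> \<epsilon> \<phi>"
    if \<epsilon>: "0 < \<epsilon>" "\<epsilon> < \<epsilon>\<^sub>0" and model: "near_model S P K r \<epsilon> \<phi> \<phi>'" for \<epsilon> \<phi> \<phi>'
  proof -
    note right = root[OF \<epsilon> model] and left = root[OF \<epsilon> near_model_reflect[OF model]]
    obtain xp where xp: "0 < xp" "xp < \<delta>" "\<phi> xp = 0"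
      and xp_unique: "\<And>x. 0 < x \<Longrightarrow> x < \<delta> \<Longrightarrow> \<phi> x = 0 \<Longrightarrow> x = xp"
      using right by (elim conjE ex1E) blast
    obtain y where y: "0 < y" "y < \<delta>" "\<phi> (- y) = 0"
      and y_unique: "\<And>x. 0 < x \<Longrightarrow> x < \<delta> \<Longrightarrow> \<phi> (- x) = 0 \<Longrightarrow> x = y"
      using left by (elim conjE ex1E) blast
    have "x = xp \<or> x = - y" if "\<bar>x\<bar> < \<delta>" "\<phi> x = 0" for x
    proof (cases "x > 0")
      case True
      then show ?thesis
        using xp_unique that by simp
    next
      case False
      moreover have "\<phi> 0 < 0"
        using right by (rule conjunct1)
      then have "x \<noteq> 0"
        using that(2) by auto
      ultimately show ?thesis
        using y_unique[of "- x"] that by simp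
    qed
    moreover have "\<bar>xp - sqrt (- S / P) * \<epsilon>\<bar> \<le> C * \<epsilon>\<^sup>2" "\<bar>- y + sqrt (- S / P) * \<epsilon>\<bar> \<le> C * \<epsilon>\<^sup>2"
      using right xp left y by (auto simp: abs_minus_commute)
    ultimately show ?thesis
      unfolding root_pair_def using xp(3) y(3) by blast
  qed
  then show ?thesis
    using \<open>\<delta> > 0\<close> \<open>\<epsilon>\<^sub>0 > 0\<close> by blast
qed

lemma near_model_two_roots:
  assumes SP: "S / P < 0" and K: "K \<ge> 0" and r: "r > 0"
  shows "\<exists>\<delta>>0. \<exists>\<epsilon>\<^sub>0>0. \<exists>C. \<forall>\<epsilon> \<phi> \<phi>'. 0 < \<epsilon> \<and> \<epsilon> < \<epsilon>\<^sub>0 \<and> near_model S P K r \<epsilon> \<phi> \<phi>' \<longrightarrow>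
           root_pair (sqrt (- S / P)) C \<delta> \<epsilon> \<phi>"
proof (cases "P > 0")
  case True
  then show ?thesis
    using near_model_two_roots_pos[OF _ True K r] SP by (simp add: divide_less_0_iff)
next
  case False
  then have neg: "- S < 0" "- P > 0"
    using SP by (auto simp: divide_less_0_iff)
  have ratio: "- (- S) / (- P) = - S / P"
    by simp
  obtain \<delta> \<epsilon>\<^sub>0 C where "\<delta> > 0" "\<epsilon>\<^sub>0 > 0"
    and roots: "\<And>\<epsilon> \<phi> \<phi>'. 0 < \<epsilon> \<Longrightarrow> \<epsilon> < \<epsilon>\<^sub>0 \<Longrightarrow> near_model (- S) (- P) K r \<epsilon> \<phi> \<phi>' \<Longrightarrow>
      root_pair (sqrt (- S / P)) C \<delta> \<epsilon> \<phi>"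
    using near_model_two_roots_pos[OF neg K r] unfolding ratio by blast
  have "root_pair (sqrt (- S / P)) C \<delta> \<epsilon> \<phi>"
    if "0 < \<epsilon>" "\<epsilon> < \<epsilon>\<^sub>0" "near_model S P K r \<epsilon> \<phi> \<phi>'" for \<epsilon> \<phi> \<phi>'
    using roots[OF that(1,2) near_model_uminus[OF that(3)]] by (simp add: root_pair_def)
  then show ?thesis
    using \<open>\<delta> > 0\<close> \<open>\<epsilon>\<^sub>0 > 0\<close> by blast
qed

lemma eventually_choice:
  assumes "eventually (\<lambda>l. \<exists>y. Q l y) F"
  shows "\<exists>f. eventually (\<lambda>l. Q l (f l)) F"
proof -
  define f where "f l = (SOME y. Q l y)" for l
  from assms have "eventually (\<lambda>l. Q l (f l)) F"
    by eventually_elim (unfold f_def, rule someI_ex)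
  then show ?thesis
    by blast
qed

lemma eventually_near_model_nonvanishing:
  assumes SP: "S / P > 0" and K: "K \<ge> 0" and r: "r > 0"
    and \<epsilon>: "(\<epsilon> \<longlongrightarrow> 0) F" "eventually (\<lambda>l. \<epsilon> l > 0) F"
    and model: "eventually (\<lambda>l. \<exists>\<phi>'. near_model S P K r (\<epsilon> l) (g l) \<phi>') F"
  shows "\<exists>\<delta>>0. eventually (\<lambda>l. \<forall>x. \<bar>x\<bar> < \<delta> \<longrightarrow> g l x \<noteq> 0) F"
proof -
  obtain \<delta> where "\<delta> > 0" and \<delta>: "\<And>\<epsilon> \<phi> \<phi>' x. 0 < \<epsilon> \<Longrightarrow> \<epsilon> < \<delta> \<Longrightarrow> near_model S P K r \<epsilon> \<phi> \<phi>' \<Longrightarrow>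
      \<bar>x\<bar> < \<delta> \<Longrightarrow> \<phi> x \<noteq> 0"
    using near_model_nonvanishing[OF SP K r] by blast
  have "eventually (\<lambda>l. \<epsilon> l < \<delta>) F"
    using \<epsilon>(1) \<open>\<delta> > 0\<close> by (rule order_tendstoD(2))
  with \<epsilon>(2) model have "eventually (\<lambda>l. \<forall>x. \<bar>x\<bar> < \<delta> \<longrightarrow> g l x \<noteq> 0) F"
  proof eventually_elim
    case (elim l)
    then obtain \<phi>' where "near_model S P K r (\<epsilon> l) (g l) \<phi>'"
      by blast
    with elim show ?case
      using \<delta> by blast
  qed
  with \<open>\<delta> > 0\<close> show ?thesis by blast
qed

lemma eventually_near_model_two_roots:
  assumes SP: "S / P < 0" and K: "K \<ge> 0" and r: "r > 0"
    and \<epsilon>: "(\<epsilon> \<longlongrightarrow> 0) F" "eventually (\<lambda>l. \<epsilon> l > 0) F"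
    and model: "eventually (\<lambda>l. \<exists>\<phi>'. near_model S P K r (\<epsilon> l) (g l) \<phi>') F"
  shows "\<exists>\<delta>>0. \<exists>C xp xm. eventually (\<lambda>l. g l (xp l) = 0 \<and> g l (xm l) = 0 \<and>
           \<bar>xp l - sqrt (- S / P) * \<epsilon> l\<bar> \<le> C * (\<epsilon> l)\<^sup>2 \<and> \<bar>xm l + sqrt (- S / P) * \<epsilon> l\<bar> \<le> C * (\<epsilon> l)\<^sup>2 \<and>
           (\<forall>x. \<bar>x\<bar> < \<delta> \<and> g l x = 0 \<longrightarrow> x = xp l \<or> x = xm l)) F"
proof -
  obtain \<delta> \<epsilon>\<^sub>0 C where "\<delta> > 0" "\<epsilon>\<^sub>0 > 0"
    and roots: "\<And>\<epsilon> \<phi> \<phi>'. 0 < \<epsilon> \<Longrightarrow> \<epsilon> < \<epsilon>\<^sub>0 \<Longrightarrow> near_model S P K r \<epsilon> \<phi> \<phi>' \<Longrightarrow>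
      root_pair (sqrt (- S / P)) C \<delta> \<epsilon> \<phi>"
    using near_model_two_roots[OF SP K r] by blast
  have "eventually (\<lambda>l. \<epsilon> l < \<epsilon>\<^sub>0) F"
    using \<epsilon>(1) \<open>\<epsilon>\<^sub>0 > 0\<close> by (rule order_tendstoD(2))
  with \<epsilon>(2) model have "eventually (\<lambda>l. root_pair (sqrt (- S / P)) C \<delta> (\<epsilon> l) (g l)) F"
    by eventually_elim (use roots in blast)
  then have "eventually (\<lambda>l. \<exists>x. g l (fst x) = 0 \<and> g l (snd x) = 0 \<and>
      \<bar>fst x - sqrt (- S / P) * \<epsilon> l\<bar> \<le> C * (\<epsilon> l)\<^sup>2 \<and> \<bar>snd x + sqrt (- S / P) * \<epsilon> l\<bar> \<le> C * (\<epsilon> l)\<^sup>2 \<and>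
      (\<forall>y. \<bar>y\<bar> < \<delta> \<and> g l y = 0 \<longrightarrow> y = fst x \<or> y = snd x)) F"
    unfolding root_pair_def by (rule eventually_mono) auto
  from eventually_choice[OF this] obtain x where "eventually (\<lambda>l. g l (fst (x l)) = 0 \<and> g l (snd (x l)) = 0 \<and>
      \<bar>fst (x l) - sqrt (- S / P) * \<epsilon> l\<bar> \<le> C * (\<epsilon> l)\<^sup>2 \<and> \<bar>snd (x l) + sqrt (- S / P) * \<epsilon> l\<bar> \<le> C * (\<epsilon> l)\<^sup>2 \<and>
      (\<forall>y. \<bar>y\<bar> < \<delta> \<and> g l y = 0 \<longrightarrow> y = fst (x l) \<or> y = snd (x l))) F"
    by blast
  then show ?thesis
    using \<open>\<delta> > 0\<close>
    by (intro exI[of _ \<delta>] conjI exI[of _ C] exI[of _ "\<lambda>l. fst (x l)"] exI[of _ "\<lambda>l. snd (x l)"]) simp_all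
qed

section \<open>The p-th bifurcation equation\<close>

lemma powr_two_powr_square:
  fixes l a :: real
  assumes "l > 0"
  shows "(l powr (2 powr - (a + 1)))\<^sup>2 = l powr (2 powr - a)"
proof -
  have "(2::real) powr (1 + - (a + 1)) = 2 powr 1 * 2 powr - (a + 1)"
    by (rule powr_add)
  then have "2 * 2 powr - (a + 1) = (2::real) powr - a"
    by simp
  then show ?thesis
    using assms by (simp add: powr_realpow[symmetric] powr_powr mult.commute)
qed

lemma powr_two_powr_fourth:
  fixes l a :: real
  assumes "l > 0"
  shows "(l powr (2 powr - (a + 1)))^4 = l powr (2 powr - (a - 1))"
proof -
  have "(l powr (2 powr - (a + 1)))^4 = ((l powr (2 powr - (a + 1)))\<^sup>2)\<^sup>2"
    by (simp flip: power_mult)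
  also have "\<dots> = (l powr (2 powr - a))\<^sup>2"
    by (simp only: powr_two_powr_square[OF assms])
  also have "\<dots> = l powr (2 powr - (a - 1))"
    using powr_two_powr_square[OF assms, of "a - 1"] by simp
  finally show ?thesis .
qed

lemma powr_two_powr_mono:
  fixes l a b :: real
  assumes "0 < l" "l < 1" "a \<le> b"
  shows "l powr (2 powr - a) \<le> l powr (2 powr - b)"
  using assms by (intro powr_mono' powr_mono) auto

lemma hyp_H_scaled_bounds:
  fixes X :: nat and \<epsilon> :: "real \<Rightarrow> real"
  assumes H: "hyp_H sig p xs d xi" and q: "net_above sig q p" and "xi q \<le> X"
    and \<epsilon>_def: "\<And>l. \<epsilon> l = l powr (2 powr - (real X + 1))"
  shows "\<exists>C\<ge>0. eventually (\<lambda>l. \<bar>xs q l\<bar> \<le> C * (\<epsilon> l)\<^sup>2 \<and>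
           \<bar>xs q l - (if xi q = X then d q * (\<epsilon> l)\<^sup>2 else 0)\<bar> \<le> C * (\<epsilon> l)^4) (at_right 0)"
proof -
  define A where "A l = l powr (2 powr - real (xi q))" for l :: real
  define B where "B l = l powr (2 powr - (real (xi q) - 1))" for l :: real
  have "(\<lambda>l. xs q l - d q * A l) \<in> O[at_right 0](B)"
    using H q unfolding hyp_H_def A_def B_def by blast
  then obtain c where "c > 0"
    and big_O: "eventually (\<lambda>l. norm (xs q l - d q * A l) \<le> c * norm (B l)) (at_right 0)"
    by (elim landau_o.bigE)
  have "eventually (\<lambda>l::real. 0 < l \<and> l < 1) (at_right 0)"
    by (rule eventually_at_rightI[of 0 1]) auto
  with big_O have "eventually (\<lambda>l. \<bar>xs q l\<bar> \<le> (\<bar>d q\<bar> + c) * (\<epsilon> l)\<^sup>2 \<and>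
      \<bar>xs q l - (if xi q = X then d q * (\<epsilon> l)\<^sup>2 else 0)\<bar> \<le> (\<bar>d q\<bar> + c) * (\<epsilon> l)^4) (at_right 0)"
  proof eventually_elim
    case (elim l)
    then have l: "0 < l" "l < 1" and err: "\<bar>xs q l - d q * A l\<bar> \<le> c * B l"
      by (auto simp: B_def)
    have \<epsilon>2: "(\<epsilon> l)\<^sup>2 = l powr (2 powr - real X)"
      and \<epsilon>4: "(\<epsilon> l)^4 = l powr (2 powr - (real X - 1))"
      using powr_two_powr_square[OF l(1)] powr_two_powr_fourth[OF l(1)] by (simp_all add: \<epsilon>_def)
    have BA: "B l \<le> A l"
      unfolding A_def B_def using l by (intro powr_two_powr_mono) auto
    have "A l \<le> (\<epsilon> l)\<^sup>2"
      unfolding A_def \<epsilon>2 using l \<open>xi q \<le> X\<close> by (intro powr_two_powr_mono) auto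
    have "A l \<ge> 0"
      by (simp add: A_def)
    have "\<bar>xs q l\<bar> \<le> \<bar>xs q l - d q * A l\<bar> + \<bar>d q\<bar> * A l"
      using abs_triangle_ineq[of "xs q l - d q * A l" "d q * A l"] \<open>A l \<ge> 0\<close> by (simp add: abs_mult)
    also have "\<dots> \<le> c * A l + \<bar>d q\<bar> * A l"
      using err mult_left_mono[OF BA, of c] \<open>c > 0\<close> by linarith
    finally have xs: "\<bar>xs q l\<bar> \<le> (\<bar>d q\<bar> + c) * A l"
      by (simp add: algebra_simps)
    then have "\<bar>xs q l\<bar> \<le> (\<bar>d q\<bar> + c) * (\<epsilon> l)\<^sup>2"
      using mult_left_mono[OF \<open>A l \<le> (\<epsilon> l)\<^sup>2\<close>, of "\<bar>d q\<bar> + c"] \<open>c > 0\<close> by linarith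
    moreover have "\<bar>xs q l - (if xi q = X then d q * (\<epsilon> l)\<^sup>2 else 0)\<bar> \<le> (\<bar>d q\<bar> + c) * (\<epsilon> l)^4"
    proof (cases "xi q = X")
      case True
      then have "A l = (\<epsilon> l)\<^sup>2" "B l = (\<epsilon> l)^4"
        unfolding A_def B_def \<epsilon>2 \<epsilon>4 by simp_all
      then show ?thesis
        using True err mult_right_mono[of c "\<bar>d q\<bar> + c" "(\<epsilon> l)^4"] by simp
    next
      case False
      then have "A l \<le> (\<epsilon> l)^4"
        unfolding A_def \<epsilon>4 using l \<open>xi q \<le> X\<close> by (intro powr_two_powr_mono) auto
      then show ?thesis
        using False xs mult_left_mono[OF \<open>A l \<le> (\<epsilon> l)^4\<close>, of "\<bar>d q\<bar> + c"] \<open>c > 0\<close> by simp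
    qed
    ultimately show ?case ..
  qed
  then show ?thesis
    using \<open>c > 0\<close> by (intro exI[of _ "\<bar>d q\<bar> + c"]) auto
qed

lemma powr_two_powr_scale_bounds:
  fixes X :: nat and l :: real
  assumes "X > 0" "0 < l" "l < 1"
  defines "\<epsilon> \<equiv> l powr (2 powr - (real X + 1))"
  shows "\<epsilon>^4 \<le> \<epsilon>\<^sup>2" and "l \<le> \<epsilon>^4"
proof -
  have \<epsilon>2: "\<epsilon>\<^sup>2 = l powr (2 powr - real X)" and \<epsilon>4: "\<epsilon>^4 = l powr (2 powr - (real X - 1))"
    using powr_two_powr_square[OF assms(2)] powr_two_powr_fourth[OF assms(2)] by (simp_all add: \<epsilon>_def)
  show "\<epsilon>^4 \<le> \<epsilon>\<^sup>2"
    unfolding \<epsilon>2 \<epsilon>4 using assms(2,3) by (intro powr_two_powr_mono) auto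
  have "l powr (2 powr - 0) \<le> l powr (2 powr - (real X - 1))"
    using assms by (intro powr_two_powr_mono) auto
  then show "l \<le> \<epsilon>^4"
    unfolding \<epsilon>4 using assms(2) by simp
qed

definition upstream_input :: "('s::finite \<Rightarrow> 'c \<Rightarrow> 'c) \<Rightarrow> 'c \<Rightarrow> ('c \<Rightarrow> real \<Rightarrow> real) \<Rightarrow> real
    \<Rightarrow> (real^'s) \<times> real" where
  "upstream_input sig p xs l = (\<chi> s. if sig s p = p then 0 else xs (sig s p) l, l)"

definition self_direction :: "('s::finite \<Rightarrow> 'c \<Rightarrow> 'c) \<Rightarrow> 'c \<Rightarrow> (real^'s) \<times> real" where
  "self_direction sig p = (\<chi> s. if sig s p = p then 1 else 0, 0)"

lemma peq_eq_line: "peq sig f p xs x l = f (upstream_input sig p xs l + x *\<^sub>R self_direction sig p)"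
  unfolding peq_def upstream_input_def self_direction_def
  by (rule arg_cong[where f=f]) (simp add: prod_eq_iff vec_eq_iff)

lemma dirx_Basis: "dirx s \<in> (Basis :: ((real^'s::finite) \<times> real) set)"
  unfolding dirx_def Basis_prod_def by (auto simp: cart_eq_inner_axis)

lemma dirx_eq_iff: "dirx s = dirx t \<longleftrightarrow> s = t"
  unfolding dirx_def by (auto simp: axis_eq_axis)

lemma sum_dirx: "(\<Sum>s\<in>A. v s *\<^sub>R dirx s) = ((\<Sum>s\<in>A. v s *\<^sub>R axis s 1, 0) :: (real^'s::finite) \<times> real)"
  by (simp add: dirx_def prod_eq_iff fst_sum snd_sum)

lemma self_direction_eq_sum: "self_direction sig p = (\<Sum>s\<in>Lset sig p. dirx s)"
proof -
  have "(\<Sum>s\<in>Lset sig p. axis s (1::real)) = (\<chi> s. if sig s p = p then 1 else 0)"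
    by (simp add: vec_eq_iff sum_component axis_def Lset_def if_distrib[of "\<lambda>x. x $ _"]
        sum.If_cases[where A="Lset sig p"] cong: if_cong)
  then show ?thesis
    using sum_dirx[of "\<lambda>_. 1" "Lset sig p"] by (simp add: self_direction_def)
qed

lemma upstream_input_eq_sum:
  "upstream_input sig p xs l =
     (\<Sum>s\<in>UNIV. (if sig s p = p then 0 else xs (sig s p) l) *\<^sub>R dirx s) + l *\<^sub>R (0, 1)"
  using basis_expansion[of "\<chi> s. if sig s p = p then 0 else xs (sig s p) l"]
  by (simp add: sum_dirx upstream_input_def scalar_mult_eq_scaleR)

lemma pd_self_direction:
  assumes "smooth f" "critical sig f p"
  shows "pd f [self_direction sig p] 0 = 0"
  using assms(2) unfolding self_direction_eq_sum pd_Cons_sum[OF assms(1) finite]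
  by (simp add: critical_def acoef_def)

lemma pd_self_direction_twice:
  assumes "smooth f"
  shows "pd f [self_direction sig p, self_direction sig p] 0 = 2 * Fsum sig f p"
  unfolding self_direction_eq_sum pd_Cons_sum[OF assms finite] pd_two_sums[OF assms finite]
  by (subst sum.swap) (simp add: Fsum_def fcoef_def sum_distrib_left)

lemma pd_upstream_input:
  assumes "smooth f"
  shows "pd f [upstream_input sig p xs l] 0 =
    (\<Sum>s\<in>UNIV. (if sig s p = p then 0 else xs (sig s p) l) * acoef f s) + l * pd f [(0, 1)] 0"
  unfolding upstream_input_eq_sum pd_Cons_add[OF assms] pd_Cons_sum[OF assms finite]
    pd_Cons_scaleR[OF assms] acoef_def ..

lemma SNsum_mult_eq_sum:
  "SNsum sig f p d xi * c =
     (\<Sum>s\<in>UNIV. (if sig s p \<in> Qset sig p xi then d (sig s p) * c else 0) * acoef f s)"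
proof -
  have "(\<Sum>s\<in>UNIV. (if sig s p \<in> Qset sig p xi then d (sig s p) * c else 0) * acoef f s) =
      (\<Sum>s\<in>UNIV. if sig s p \<in> Qset sig p xi then acoef f s * d (sig s p) * c else 0)"
    by (intro sum.cong) auto
  also have "\<dots> = SNsum sig f p d xi * c"
    by (simp add: sum.If_cases SNsum_def sum_distrib_right)
  finally show ?thesis ..
qed

lemma smooth_near_model_on_line:
  fixes f :: "'a::euclidean_space \<Rightarrow> real"
  assumes sm: "smooth f" and e1: "pd f [e] 0 = 0" and e2: "pd f [e, e] 0 = 2 * P"
    and M: "\<forall>vs\<in>{[e], [e, e]}. \<forall>y. norm y \<le> 1 \<longrightarrow> \<bar>pd f vs y - pd f vs 0\<bar> \<le> M * norm y"
    and K: "K \<ge> 0" "M \<ge> 0" "M * K\<^sub>1 \<le> K" "M * norm e \<le> K"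
    and v: "norm v \<le> K\<^sub>1 * \<eta>\<^sup>2" "norm v \<le> 1 / 2" and r: "r * norm e \<le> 1 / 2"
    and f_v: "\<bar>f v - S * \<eta>\<^sup>2\<bar> \<le> K * \<eta>^4"
  shows "near_model S P K r \<eta> (\<lambda>x. f (v + x *\<^sub>R e)) (\<lambda>x. pd f [e] (v + x *\<^sub>R e))"
proof -
  define D where "D m x = pd f (replicate m e) (v + x *\<^sub>R e)" for m x
  have "\<forall>m x. (D m has_real_derivative D (Suc m) x) (at x)"
    unfolding D_def using pd_has_real_derivative_line[OF sm] by simp
  moreover have "\<bar>D 0 0 - S * \<eta>\<^sup>2\<bar> \<le> K * \<eta>^4"
    using f_v by (simp add: D_def)
  moreover have "\<bar>D 1 0\<bar> \<le> K * \<eta>\<^sup>2"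
  proof -
    have "\<bar>pd f [e] v\<bar> \<le> M * norm v"
      using M v e1 by simp
    also have "\<dots> \<le> (M * K\<^sub>1) * \<eta>\<^sup>2"
      using v K(2) by (simp add: mult_left_mono mult.assoc)
    also have "\<dots> \<le> K * \<eta>\<^sup>2"
      using K(3) by (intro mult_right_mono) auto
    finally show ?thesis
      by (simp add: D_def)
  qed
  moreover have "\<bar>D 2 x - 2 * P\<bar> \<le> K * (\<eta>\<^sup>2 + \<bar>x\<bar>)" if x: "\<bar>x\<bar> < r" for x
  proof -
    have "\<bar>x\<bar> * norm e \<le> r * norm e"
      using x by (intro mult_right_mono) auto
    then have nx: "norm (v + x *\<^sub>R e) \<le> K\<^sub>1 * \<eta>\<^sup>2 + \<bar>x\<bar> * norm e" "norm (v + x *\<^sub>R e) \<le> 1"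
      using norm_triangle_ineq[of v "x *\<^sub>R e"] v r by auto
    have "\<bar>pd f [e, e] (v + x *\<^sub>R e) - 2 * P\<bar> \<le> M * norm (v + x *\<^sub>R e)"
      using M nx(2) e2 by simp
    also have "\<dots> \<le> (M * K\<^sub>1) * \<eta>\<^sup>2 + (M * norm e) * \<bar>x\<bar>"
      using mult_left_mono[OF nx(1) K(2)] by (simp add: algebra_simps)
    also have "\<dots> \<le> K * \<eta>\<^sup>2 + K * \<bar>x\<bar>"
      using K(3,4) by (intro add_mono mult_right_mono) auto
    finally show ?thesis
      by (simp add: D_def numeral_2_eq_2 algebra_simps)
  qed
  ultimately have "near_model S P K r \<eta> (D 0) (D 1)"
    using K(1) by (rule near_model_of_derivatives)
  moreover have "D 0 = (\<lambda>x. f (v + x *\<^sub>R e))" "D 1 = (\<lambda>x. pd f [e] (v + x *\<^sub>R e))"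
    by (simp_all add: D_def fun_eq_iff)
  ultimately show ?thesis
    by simp
qed

lemma eventually_smooth_near_model_on_line:
  fixes f :: "'a::euclidean_space \<Rightarrow> real" and u :: "'b \<Rightarrow> 'a" and \<epsilon> :: "'b \<Rightarrow> real"
  assumes sm: "smooth f" and f0: "f 0 = 0"
    and e1: "pd f [e] 0 = 0" and e2: "pd f [e, e] 0 = 2 * P"
    and K\<^sub>1: "K\<^sub>1 \<ge> 0" and u: "eventually (\<lambda>l. norm (u l) \<le> K\<^sub>1 * (\<epsilon> l)\<^sup>2) F"
    and K\<^sub>2: "K\<^sub>2 \<ge> 0" and lin: "eventually (\<lambda>l. \<bar>pd f [u l] 0 - S * (\<epsilon> l)\<^sup>2\<bar> \<le> K\<^sub>2 * (\<epsilon> l)^4) F"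
    and \<epsilon>: "(\<epsilon> \<longlongrightarrow> 0) F"
  shows "\<exists>K\<ge>0. \<exists>r>0. eventually (\<lambda>l.
           near_model S P K r (\<epsilon> l) (\<lambda>x. f (u l + x *\<^sub>R e)) (\<lambda>x. pd f [e] (u l + x *\<^sub>R e))) F"
proof -
  obtain M where "M \<ge> 0"
    and M: "\<forall>vs\<in>{[e], [e, e]}. \<forall>y. norm y \<le> 1 \<longrightarrow> \<bar>pd f vs y - pd f vs 0\<bar> \<le> M * norm y"
    using pd_lipschitz_at_0[OF sm, of "{[e], [e, e]}"] by blast
  obtain M\<^sub>f where "M\<^sub>f \<ge> 0" and M\<^sub>f: "\<And>y. norm y \<le> 1 \<Longrightarrow> \<bar>f y - pd f [y] 0\<bar> \<le> M\<^sub>f * (norm y)\<^sup>2"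
    using smooth_quadratic_remainder[OF sm f0] by blast
  define K where "K = M\<^sub>f * K\<^sub>1\<^sup>2 + K\<^sub>2 + M * K\<^sub>1 + M * (K\<^sub>1 + norm e)"
  have K: "K \<ge> 0" "M * K\<^sub>1 \<le> K" "M * norm e \<le> K" and "M\<^sub>f * K\<^sub>1\<^sup>2 + K\<^sub>2 \<le> K"
    using \<open>M \<ge> 0\<close> \<open>M\<^sub>f \<ge> 0\<close> K\<^sub>1 K\<^sub>2 by (auto simp: K_def algebra_simps)
  define r where "r = 1 / (2 * (norm e + 1))"
  have ne: "norm e + 1 > 0"
    using norm_ge_zero[of e] by linarith
  then have "r > 0"
    by (simp add: r_def)
  have "r * norm e = (norm e / (norm e + 1)) / 2"
    by (simp add: r_def)
  also have "\<dots> \<le> 1 / 2"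
    using ne by simp
  finally have "r * norm e \<le> 1 / 2" .
  have "((\<lambda>l. K\<^sub>1 * (\<epsilon> l)\<^sup>2) \<longlongrightarrow> K\<^sub>1 * 0\<^sup>2) F"
    by (intro tendsto_intros \<epsilon>)
  then have "eventually (\<lambda>l. K\<^sub>1 * (\<epsilon> l)\<^sup>2 < 1 / 2) F"
    by (intro order_tendstoD(2)) auto
  with u lin have "eventually (\<lambda>l.
      near_model S P K r (\<epsilon> l) (\<lambda>x. f (u l + x *\<^sub>R e)) (\<lambda>x. pd f [e] (u l + x *\<^sub>R e))) F"
  proof eventually_elim
    case (elim l)
    then have v: "norm (u l) \<le> K\<^sub>1 * (\<epsilon> l)\<^sup>2" "norm (u l) \<le> 1 / 2"
      by auto
    have "\<bar>f (u l) - pd f [u l] 0\<bar> \<le> M\<^sub>f * (K\<^sub>1 * (\<epsilon> l)\<^sup>2)\<^sup>2"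
      using order_trans[OF M\<^sub>f mult_left_mono[OF power_mono]] v \<open>M\<^sub>f \<ge> 0\<close> by simp
    then have "\<bar>f (u l) - S * (\<epsilon> l)\<^sup>2\<bar> \<le> (M\<^sub>f * K\<^sub>1\<^sup>2 + K\<^sub>2) * (\<epsilon> l)^4"
      using elim by (simp add: power_mult_distrib algebra_simps flip: power_mult)
    also have "\<dots> \<le> K * (\<epsilon> l)^4"
      using \<open>M\<^sub>f * K\<^sub>1\<^sup>2 + K\<^sub>2 \<le> K\<close> by (intro mult_right_mono) auto
    finally show ?case
      by (rule smooth_near_model_on_line[OF sm e1 e2 M K(1) \<open>M \<ge> 0\<close> K(2,3) v \<open>r * norm e \<le> 1 / 2\<close>])
  qed
  then show ?thesis
    using K(1) \<open>r > 0\<close> by blast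
qed

lemma eventually_uniform_constant:
  fixes P :: "'i::finite \<Rightarrow> real \<Rightarrow> 'a \<Rightarrow> bool"
  assumes ex: "\<And>i. \<exists>C\<ge>0. eventually (P i C) F"
    and mono: "\<And>i C C' x. C \<le> C' \<Longrightarrow> P i C x \<Longrightarrow> P i C' x"
  shows "\<exists>C\<ge>0. eventually (\<lambda>x. \<forall>i. P i C x) F"
proof -
  have "\<forall>i. \<exists>C. C \<ge> 0 \<and> eventually (P i C) F"
    using ex by blast
  from choice[OF this] obtain C where C: "\<And>i. C i \<ge> 0" "\<And>i. eventually (P i (C i)) F"
    by blast
  have C_le: "C i \<le> (\<Sum>j\<in>UNIV. C j)" for i
    using C(1) by (intro member_le_sum) auto
  have "eventually (P i (\<Sum>j\<in>UNIV. C j)) F" for i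
    using C(2)[of i] by (rule eventually_mono) (rule mono[OF C_le])
  then have "eventually (\<lambda>x. \<forall>i\<in>UNIV. P i (\<Sum>j\<in>UNIV. C j) x) F"
    by (intro eventually_ball_finite) auto
  moreover have "(\<Sum>j\<in>UNIV. C j) \<ge> 0"
    using C(1) by (simp add: sum_nonneg)
  ultimately show ?thesis
    by auto
qed

lemma scaled_upstream_bounds:
  fixes sig :: "'s::finite \<Rightarrow> 'c::finite \<Rightarrow> 'c" and \<epsilon> :: "real \<Rightarrow> real"
  assumes H: "hyp_H sig p xs d xi"
    and \<epsilon>_def: "\<And>l. \<epsilon> l = l powr (2 powr - (real (Xi sig p xi) + 1))"
  shows "\<exists>C\<ge>0. eventually (\<lambda>l. \<forall>s.
           \<bar>if sig s p = p then 0 else xs (sig s p) l\<bar> \<le> C * (\<epsilon> l)\<^sup>2 \<and>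
           \<bar>(if sig s p = p then 0 else xs (sig s p) l) -
              (if sig s p \<in> Qset sig p xi then d (sig s p) * (\<epsilon> l)\<^sup>2 else 0)\<bar> \<le> C * (\<epsilon> l)^4) (at_right 0)"
proof -
  have "\<exists>C\<ge>0. eventually (\<lambda>l.
           \<bar>if sig s p = p then 0 else xs (sig s p) l\<bar> \<le> C * (\<epsilon> l)\<^sup>2 \<and>
           \<bar>(if sig s p = p then 0 else xs (sig s p) l) -
              (if sig s p \<in> Qset sig p xi then d (sig s p) * (\<epsilon> l)\<^sup>2 else 0)\<bar> \<le> C * (\<epsilon> l)^4) (at_right 0)"
    for s
  proof (cases "sig s p = p")
    case True
    then have "sig s p \<notin> Qset sig p xi"
      by (simp add: Qset_def Sig_star_def)
    with True show ?thesis
      by (intro exI[of _ 0]) simp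
  next
    case False
    then have q: "sig s p \<in> Sig_star sig p" "net_above sig (sig s p) p"
      by (auto simp: Sig_star_def Sig_of_def net_above_def net_le_def edges_def)
    then have "xi (sig s p) \<le> Xi sig p xi"
      unfolding Xi_def by (intro Max_ge) auto
    from hyp_H_scaled_bounds[OF H q(2) this \<epsilon>_def] False q(1) show ?thesis
      by (simp add: Qset_def)
  qed
  then show ?thesis
  proof (rule eventually_uniform_constant)
    fix s C C' l
    assume "C \<le> C'" and "\<bar>if sig s p = p then 0 else xs (sig s p) l\<bar> \<le> C * (\<epsilon> l)\<^sup>2 \<and>
           \<bar>(if sig s p = p then 0 else xs (sig s p) l) -
              (if sig s p \<in> Qset sig p xi then d (sig s p) * (\<epsilon> l)\<^sup>2 else 0)\<bar> \<le> C * (\<epsilon> l)^4"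
    moreover have "C * (\<epsilon> l)\<^sup>2 \<le> C' * (\<epsilon> l)\<^sup>2" "C * (\<epsilon> l)^4 \<le> C' * (\<epsilon> l)^4"
      using \<open>C \<le> C'\<close> by (simp_all add: mult_right_mono)
    ultimately show "\<bar>if sig s p = p then 0 else xs (sig s p) l\<bar> \<le> C' * (\<epsilon> l)\<^sup>2 \<and>
           \<bar>(if sig s p = p then 0 else xs (sig s p) l) -
              (if sig s p \<in> Qset sig p xi then d (sig s p) * (\<epsilon> l)\<^sup>2 else 0)\<bar> \<le> C' * (\<epsilon> l)^4"
      by linarith
  qed
qed

lemma tendsto_powr_at_right_0: "a > 0 \<Longrightarrow> ((\<lambda>l::real. l powr a) \<longlongrightarrow> 0) (at_right 0)"
  by (rule tendsto_zero_powrI[OF tendsto_ident_at tendsto_const])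
     (auto intro: eventually_mono[OF eventually_at_right_less])

lemma norm_upstream_input_le:
  fixes sig :: "'s::finite \<Rightarrow> 'c \<Rightarrow> 'c" and C e :: real
  assumes us: "\<And>s. \<bar>if sig s p = p then 0 else xs (sig s p) l\<bar> \<le> C * e" and l: "0 < l" "l \<le> e"
  shows "norm (upstream_input sig p xs l) \<le> (CARD('s) * C + 1) * e"
proof -
  define v where "v = (\<chi> s. if sig s p = p then 0 else xs (sig s p) l)"
  have "norm (upstream_input sig p xs l) \<le> norm v + norm l"
    unfolding upstream_input_def v_def by (rule norm_Pair_le)
  also have "\<dots> \<le> (\<Sum>s\<in>UNIV. \<bar>v $ s\<bar>) + e"
    using norm_le_l1_cart[of v] l by simp
  also have "(\<Sum>s\<in>UNIV. \<bar>v $ s\<bar>) \<le> (\<Sum>s\<in>(UNIV :: 's set). C * e)"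
    by (rule sum_mono) (simp add: v_def us)
  finally show ?thesis
    by (simp add: algebra_simps)
qed

lemma pd_upstream_input_error:
  fixes sig :: "'s::finite \<Rightarrow> 'c \<Rightarrow> 'c" and C e c :: real
  assumes sm: "smooth f" and l: "0 < l" "l \<le> e"
    and us: "\<And>s. \<bar>(if sig s p = p then 0 else xs (sig s p) l) -
                   (if sig s p \<in> Qset sig p xi then d (sig s p) * c else 0)\<bar> \<le> C * e"
  shows "\<bar>pd f [upstream_input sig p xs l] 0 - SNsum sig f p d xi * c\<bar>
           \<le> ((\<Sum>s\<in>UNIV. \<bar>acoef f s\<bar> * C) + \<bar>pd f [(0, 1)] 0\<bar>) * e"
proof -
  define g where "g s = (if sig s p = p then 0 else xs (sig s p) l) -
      (if sig s p \<in> Qset sig p xi then d (sig s p) * c else 0)" for s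
  have "pd f [upstream_input sig p xs l] 0 - SNsum sig f p d xi * c =
      (\<Sum>s\<in>UNIV. acoef f s * g s) + l * pd f [(0, 1)] 0"
    unfolding pd_upstream_input[OF sm] SNsum_mult_eq_sum g_def
    by (simp add: algebra_simps sum_subtractf)
  also have "\<bar>\<dots>\<bar> \<le> \<bar>\<Sum>s\<in>UNIV. acoef f s * g s\<bar> + \<bar>l * pd f [(0, 1)] 0\<bar>"
    by (rule abs_triangle_ineq)
  also have "\<dots> \<le> (\<Sum>s\<in>UNIV. \<bar>acoef f s\<bar> * \<bar>g s\<bar>) + l * \<bar>pd f [(0, 1)] 0\<bar>"
    using sum_abs[of "\<lambda>s. acoef f s * g s" UNIV] l by (simp add: abs_mult)
  also have "\<dots> \<le> (\<Sum>s\<in>UNIV. \<bar>acoef f s\<bar> * (C * e)) + e * \<bar>pd f [(0, 1)] 0\<bar>"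
    using us l unfolding g_def by (intro add_mono sum_mono mult_left_mono mult_right_mono) auto
  finally show ?thesis
    by (simp add: sum_distrib_left sum_distrib_right algebra_simps)
qed

lemma peq_near_model:
  fixes sig :: "'s::finite \<Rightarrow> 'c::finite \<Rightarrow> 'c" and f :: "'s resp" and \<epsilon> :: "real \<Rightarrow> real"
  assumes sm: "smooth f" and f0: "f 0 = 0" and crit: "critical sig f p"
    and H: "hyp_H sig p xs d xi" and X: "Xi sig p xi > 0"
    and \<epsilon>_def: "\<And>l. \<epsilon> l = l powr (2 powr - (real (Xi sig p xi) + 1))"
  shows "\<exists>K\<ge>0. \<exists>r>0. eventually (\<lambda>l. \<exists>\<phi>'.
           near_model (SNsum sig f p d xi) (Fsum sig f p) K r (\<epsilon> l) (\<lambda>x. peq sig f p xs x l) \<phi>') (at_right 0)"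
proof -
  obtain C where "C \<ge> 0" and C: "eventually (\<lambda>l. \<forall>s.
      \<bar>if sig s p = p then 0 else xs (sig s p) l\<bar> \<le> C * (\<epsilon> l)\<^sup>2 \<and>
      \<bar>(if sig s p = p then 0 else xs (sig s p) l) -
        (if sig s p \<in> Qset sig p xi then d (sig s p) * (\<epsilon> l)\<^sup>2 else 0)\<bar> \<le> C * (\<epsilon> l)^4) (at_right 0)"
    using scaled_upstream_bounds[OF H \<epsilon>_def] by blast
  define K\<^sub>1 where "K\<^sub>1 = CARD('s) * C + 1"
  define K\<^sub>2 where "K\<^sub>2 = (\<Sum>s\<in>UNIV. \<bar>acoef f s\<bar> * C) + \<bar>pd f [(0, 1)] 0\<bar>"
  have "eventually (\<lambda>l::real. 0 < l \<and> l < 1) (at_right 0)"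
    by (rule eventually_at_rightI[of 0 1]) auto
  with C have "eventually (\<lambda>l. norm (upstream_input sig p xs l) \<le> K\<^sub>1 * (\<epsilon> l)\<^sup>2 \<and>
      \<bar>pd f [upstream_input sig p xs l] 0 - SNsum sig f p d xi * (\<epsilon> l)\<^sup>2\<bar> \<le> K\<^sub>2 * (\<epsilon> l)^4) (at_right 0)"
  proof eventually_elim
    case (elim l)
    then have "(\<epsilon> l)^4 \<le> (\<epsilon> l)\<^sup>2" "l \<le> (\<epsilon> l)^4" "0 < l"
      using powr_two_powr_scale_bounds[OF X] by (auto simp: \<epsilon>_def)
    then show ?case
      using norm_upstream_input_le[of sig p xs l C "(\<epsilon> l)\<^sup>2"]
        pd_upstream_input_error[OF sm, of l "(\<epsilon> l)^4" sig p xs xi d "(\<epsilon> l)\<^sup>2" C] elim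
      by (auto simp: K\<^sub>1_def K\<^sub>2_def)
  qed
  then have "eventually (\<lambda>l. norm (upstream_input sig p xs l) \<le> K\<^sub>1 * (\<epsilon> l)\<^sup>2) (at_right 0)"
    and "eventually (\<lambda>l. \<bar>pd f [upstream_input sig p xs l] 0 - SNsum sig f p d xi * (\<epsilon> l)\<^sup>2\<bar>
      \<le> K\<^sub>2 * (\<epsilon> l)^4) (at_right 0)"
    by (auto elim: eventually_mono)
  moreover have "K\<^sub>1 \<ge> 0" "K\<^sub>2 \<ge> 0"
    using \<open>C \<ge> 0\<close> by (auto simp: K\<^sub>1_def K\<^sub>2_def sum_nonneg)
  moreover have "(\<epsilon> \<longlongrightarrow> 0) (at_right 0)"
    unfolding \<epsilon>_def[abs_def] by (rule tendsto_powr_at_right_0) simp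
  ultimately have "\<exists>K\<ge>0. \<exists>r>0. eventually (\<lambda>l. near_model (SNsum sig f p d xi) (Fsum sig f p) K r (\<epsilon> l)
      (\<lambda>x. f (upstream_input sig p xs l + x *\<^sub>R self_direction sig p))
      (\<lambda>x. pd f [self_direction sig p] (upstream_input sig p xs l + x *\<^sub>R self_direction sig p))) (at_right 0)"
    by (intro eventually_smooth_near_model_on_line[OF sm f0 pd_self_direction[OF sm crit] pd_self_direction_twice[OF sm]])
  then show ?thesis
    unfolding peq_eq_line by (blast intro: eventually_mono)
qed
section \<open>Genericity\<close>

lemma mset_eq_doubleton_same: "mset ws = mset [a, a] \<Longrightarrow> ws = [a, a]"
proof -
  assume h: "mset ws = mset [a, a]"
  then have "length ws = 2" "set ws = {a}"
    by (metis size_mset length_Cons list.size(3) numeral_2_eq_2,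
        metis set_mset_mset insert_absorb2 list.simps(15) empty_set)
  then show ?thesis
    by (cases ws rule: remdups_adj.cases) auto
qed

lemma crit_jet_space_bump_diagonal:
  fixes sig :: "'s::finite \<Rightarrow> 'c \<Rightarrow> 'c" and s :: 's
  assumes c: "c \<in> crit_jet_space sig K 2"
  defines "w \<equiv> [dirx s, dirx s]"
  shows "c(w := c w + t) \<in> crit_jet_space sig K 2"
proof -
  have jet: "c \<in> jet_space 2"
    using c by (simp add: crit_jet_space_def)
  have w: "length w \<le> 2 \<and> set w \<subseteq> Basis"
    using dirx_Basis by (auto simp: w_def)
  have mset_w: "vs = w \<longleftrightarrow> ws = w" if "mset vs = mset ws" for vs ws
  proof
    assume "vs = w"
    then show "ws = w"
      using that mset_eq_doubleton_same[of ws "dirx s"] by (simp add: w_def)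
  next
    assume "ws = w"
    then show "vs = w"
      using that mset_eq_doubleton_same[of vs "dirx s"] by (simp add: w_def)
  qed
  have "c(w := c w + t) \<in> jet_space 2"
    unfolding jet_space_def
  proof (intro CollectI conjI allI impI)
    fix vs :: "((real^'s) \<times> real) list"
    assume vs: "\<not> (length vs \<le> 2 \<and> set vs \<subseteq> Basis)"
    then have "vs \<noteq> w"
      using w by blast
    moreover have "c vs = 0"
      using jet vs unfolding jet_space_def by blast
    ultimately show "(c(w := c w + t)) vs = 0"
      by simp
  next
    fix vs ws :: "((real^'s) \<times> real) list"
    assume "mset vs = mset ws"
    moreover have "c vs = c ws"
      using jet \<open>mset vs = mset ws\<close> unfolding jet_space_def by blast
    ultimately show "(c(w := c w + t)) vs = (c(w := c w + t)) ws"
      using mset_w[of vs ws] by simp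
  qed
  moreover have "[] \<noteq> w" "[dirx s'] \<noteq> w" for s'
    by (simp_all add: w_def)
  ultimately show ?thesis
    using c unfolding crit_jet_space_def by simp
qed

definition jet_Fsum :: "('s::finite \<Rightarrow> 'c \<Rightarrow> 'c) \<Rightarrow> 'c \<Rightarrow> (((real^'s) \<times> real) list \<Rightarrow> real) \<Rightarrow> real" where
  "jet_Fsum sig p c = (\<Sum>s\<in>Lset sig p. \<Sum>t\<in>Lset sig p. c [dirx s, dirx t])"

lemma jet_Fsum_jet: "jet_Fsum sig p (jet 2 f) = 2 * Fsum sig f p"
  by (simp del: pd.simps add: jet_Fsum_def Fsum_def fcoef_def jet_def dirx_Basis sum_distrib_left)

lemma jet_Fsum_bump_diagonal:
  assumes "s \<in> Lset sig p"
  defines "w \<equiv> [dirx s, dirx s]"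
  shows "jet_Fsum sig p (c(w := c w + t)) = jet_Fsum sig p c + t"
proof -
  have "jet_Fsum sig p (c(w := c w + t)) =
      jet_Fsum sig p c + (\<Sum>s'\<in>Lset sig p. \<Sum>u\<in>Lset sig p. if s' = s \<and> u = s then t else 0)"
    by (simp add: jet_Fsum_def w_def dirx_eq_iff sum.distrib[symmetric] if_distrib cong: if_cong)
  also have "(\<Sum>s'\<in>Lset sig p. \<Sum>u\<in>Lset sig p. if s' = s \<and> u = s then t else 0) =
      (\<Sum>s'\<in>Lset sig p. if s' = s then t else 0)"
    using assms(1) by (intro sum.cong refl) (simp add: sum.delta)
  also have "\<dots> = t"
    using assms(1) by (simp add: sum.delta)
  finally show ?thesis .
qed

lemma tendsto_fun_upd_add:
  fixes c :: "'a \<Rightarrow> real"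
  shows "((\<lambda>t. c(w := c w + t)) \<longlongrightarrow> c) (at_right 0)"
proof -
  have "continuous_on UNIV (\<lambda>t. c(w := c w + t))"
  proof (intro continuous_on_coordinatewise_then_product)
    fix i
    show "continuous_on UNIV (\<lambda>t. (c(w := c w + t)) i)"
      by (cases "i = w") (auto intro!: continuous_intros)
  qed
  then have "isCont (\<lambda>t. c(w := c w + t)) 0"
    by (simp add: continuous_on_eq_continuous_at)
  then have "((\<lambda>t. c(w := c w + t)) \<longlongrightarrow> c) (at 0)"
    by (simp add: isCont_def)
  then show ?thesis
    by (rule tendsto_within_subset) simp
qed

lemma crit_jet_space_jet_Fsum_dense:
  fixes sig :: "'s::finite \<Rightarrow> 'c::finite \<Rightarrow> 'c" and s1 :: 's
  assumes "network sig s1"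
  shows "crit_jet_space sig K 2 \<subseteq> closure (crit_jet_space sig K 2 \<inter> {c. jet_Fsum sig p c \<noteq> 0})"
    (is "?X \<subseteq> closure ?U")
proof
  fix c
  assume "c \<in> ?X"
  show "c \<in> closure ?U"
  proof (cases "jet_Fsum sig p c = 0")
    case False
    with \<open>c \<in> ?X\<close> have "c \<in> ?U"
      by simp
    then show ?thesis
      using closure_subset by (rule subsetD[rotated])
  next
    case True
    have "s1 \<in> Lset sig p"
      using assms by (simp add: network_def Lset_def)
    define w where "w = [dirx s1, dirx s1 :: (real^'s) \<times> real]"
    have "eventually (\<lambda>t. c(w := c w + t) \<in> ?U) (at_right 0)"
      using crit_jet_space_bump_diagonal[OF \<open>c \<in> ?X\<close>] jet_Fsum_bump_diagonal[OF \<open>s1 \<in> Lset sig p\<close>] True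
      by (auto simp: w_def intro!: eventually_at_rightI[of 0 1])
    then have "eventually (\<lambda>t. c(w := c w + t) \<in> closure ?U) (at_right 0)"
      by (rule eventually_mono) (erule subsetD[OF closure_subset])
    then show ?thesis
      by (rule Lim_in_closed_set[OF closed_closure _ _ tendsto_fun_upd_add]) simp
  qed
qed

lemma generically_if_Fsum_nonzero:
  fixes sig :: "'s::finite \<Rightarrow> 'c::finite \<Rightarrow> 'c" and s1 :: 's
  assumes net: "network sig s1"
    and main: "\<And>f. smooth f \<Longrightarrow> f 0 = 0 \<Longrightarrow> Fsum sig f p \<noteq> 0 \<Longrightarrow> P f"
  shows "generically sig K P"
proof -
  define U where "U = crit_jet_space sig K 2 \<inter> {c. jet_Fsum sig p c \<noteq> 0}"
  have "continuous_on UNIV (jet_Fsum sig p)"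
    unfolding jet_Fsum_def by (intro continuous_intros continuous_on_product_coordinates)
  then have "openin (top_of_set (crit_jet_space sig K 2)) U"
    unfolding U_def by (intro openin_open_Int open_Collect_neq continuous_on_const)
  moreover have "P f" if "smooth f" "f 0 = 0" "jet 2 f \<in> U" for f
    using that main by (simp add: U_def jet_Fsum_jet)
  ultimately show ?thesis
    unfolding generically_def using crit_jet_space_jet_Fsum_dense[OF net]
    by (intro exI[of _ 2] exI[of _ U]) (auto simp: U_def)
qed
section \<open>The saddle-node branches\<close>

lemma scaled_error_bigo:
  fixes a :: real
  assumes "eventually (\<lambda>l. \<bar>z l - D * l powr (2 powr - (a + 1))\<bar> \<le> C * (l powr (2 powr - (a + 1)))\<^sup>2) (at_right 0)"
  shows "(\<lambda>l. z l - D * l powr (2 powr - (a + 1))) \<in> O[at_right 0](\<lambda>l. l powr (2 powr - a))"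
proof (rule bigoI)
  show "eventually (\<lambda>l. norm (z l - D * l powr (2 powr - (a + 1))) \<le> C * norm (l powr (2 powr - a))) (at_right 0)"
    using assms eventually_at_right_less[of "0::real"]
  proof eventually_elim
    case (elim l)
    have "norm (l powr (2 powr - a)) = (l powr (2 powr - (a + 1)))\<^sup>2"
      using powr_two_powr_square[OF elim(2)] by simp
    then show ?case
      using elim(1) by simp
  qed
qed

lemma peq_no_small_solutions:
  fixes sig :: "'s::finite \<Rightarrow> 'c::finite \<Rightarrow> 'c" and f :: "'s resp"
  assumes "smooth f" "f 0 = 0" "critical sig f p" "hyp_H sig p xs d xi" "cond_SN sig f p d xi"
    and "SNsum sig f p d xi / Fsum sig f p > 0"
  shows "\<exists>\<delta>>0. \<forall>\<^sub>F lam in at_right 0. \<forall>x. \<bar>x\<bar> < \<delta> \<longrightarrow> peq sig f p xs x lam \<noteq> 0"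
proof -
  define \<epsilon> where "\<epsilon> l = l powr (2 powr - (real (Xi sig p xi) + 1))" for l :: real
  have "Xi sig p xi > 0"
    using assms(5) by (simp add: cond_SN_def)
  from peq_near_model[OF assms(1-4) this \<epsilon>_def] obtain K r where "K \<ge> 0" "r > 0"
    and model: "eventually (\<lambda>l. \<exists>\<phi>'.
      near_model (SNsum sig f p d xi) (Fsum sig f p) K r (\<epsilon> l) (\<lambda>x. peq sig f p xs x l) \<phi>') (at_right 0)"
    by blast
  have "(\<epsilon> \<longlongrightarrow> 0) (at_right 0)"
    unfolding \<epsilon>_def[abs_def] by (rule tendsto_powr_at_right_0) simp
  moreover have "eventually (\<lambda>l. \<epsilon> l > 0) (at_right 0)"
    using eventually_at_right_less[of "0::real"] by eventually_elim (simp add: \<epsilon>_def)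
  ultimately show ?thesis
    by (rule eventually_near_model_nonvanishing[OF assms(6) \<open>K \<ge> 0\<close> \<open>r > 0\<close> _ _ model])
qed

lemma peq_saddle_node_branches:
  fixes sig :: "'s::finite \<Rightarrow> 'c::finite \<Rightarrow> 'c" and f :: "'s resp"
  assumes "smooth f" "f 0 = 0" "critical sig f p" "hyp_H sig p xs d xi" "cond_SN sig f p d xi"
    and c: "SNsum sig f p d xi / Fsum sig f p < 0"
  defines "D \<equiv> sqrt (- (SNsum sig f p d xi / Fsum sig f p))" and "X \<equiv> Xi sig p xi"
  shows "\<exists>xp xm :: real \<Rightarrow> real.
           (\<forall>\<^sub>F lam in at_right 0. peq sig f p xs (xp lam) lam = 0 \<and> peq sig f p xs (xm lam) lam = 0) \<and>
           (\<lambda>lam. xp lam - D * lam powr (2 powr (- (real X + 1))))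
             \<in> O[at_right 0](\<lambda>lam. lam powr (2 powr (- real X))) \<and>
           (\<lambda>lam. xm lam - - D * lam powr (2 powr (- (real X + 1))))
             \<in> O[at_right 0](\<lambda>lam. lam powr (2 powr (- real X))) \<and>
           (\<exists>\<delta>>0. \<forall>\<^sub>F lam in at_right 0. \<forall>x.
              \<bar>x\<bar> < \<delta> \<and> peq sig f p xs x lam = 0 \<longrightarrow> x = xp lam \<or> x = xm lam)"
proof -
  define \<epsilon> where "\<epsilon> l = l powr (2 powr - (real X + 1))" for l :: real
  have "Xi sig p xi > 0"
    using assms(5) by (simp add: cond_SN_def)
  from peq_near_model[OF assms(1-4) this \<epsilon>_def[unfolded X_def]] obtain K r where "K \<ge> 0" "r > 0"
    and model: "eventually (\<lambda>l. \<exists>\<phi>'.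
      near_model (SNsum sig f p d xi) (Fsum sig f p) K r (\<epsilon> l) (\<lambda>x. peq sig f p xs x l) \<phi>') (at_right 0)"
    by blast
  have "(\<epsilon> \<longlongrightarrow> 0) (at_right 0)"
    unfolding \<epsilon>_def[abs_def] by (rule tendsto_powr_at_right_0) simp
  moreover have "eventually (\<lambda>l. \<epsilon> l > 0) (at_right 0)"
    using eventually_at_right_less[of "0::real"] by eventually_elim (simp add: \<epsilon>_def)
  ultimately obtain \<delta> C xp xm where "\<delta> > 0" and roots: "eventually (\<lambda>l.
      peq sig f p xs (xp l) l = 0 \<and> peq sig f p xs (xm l) l = 0 \<and>
      \<bar>xp l - D * \<epsilon> l\<bar> \<le> C * (\<epsilon> l)\<^sup>2 \<and> \<bar>xm l + D * \<epsilon> l\<bar> \<le> C * (\<epsilon> l)\<^sup>2 \<and>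
      (\<forall>x. \<bar>x\<bar> < \<delta> \<and> peq sig f p xs x l = 0 \<longrightarrow> x = xp l \<or> x = xm l)) (at_right 0)"
    using eventually_near_model_two_roots[OF c \<open>K \<ge> 0\<close> \<open>r > 0\<close> _ _ model]
    unfolding D_def minus_divide_left by blast
  have "(\<lambda>lam. xp lam - D * lam powr (2 powr (- (real X + 1)))) \<in> O[at_right 0](\<lambda>lam. lam powr (2 powr (- real X)))"
    using roots by (intro scaled_error_bigo) (auto simp: \<epsilon>_def elim: eventually_mono)
  moreover have "(\<lambda>lam. xm lam - - D * lam powr (2 powr (- (real X + 1)))) \<in> O[at_right 0](\<lambda>lam. lam powr (2 powr (- real X)))"
    using roots by (intro scaled_error_bigo) (auto simp: \<epsilon>_def elim: eventually_mono)
  moreover have "\<forall>\<^sub>F lam in at_right 0. peq sig f p xs (xp lam) lam = 0 \<and> peq sig f p xs (xm lam) lam = 0"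
    using roots by (rule eventually_mono) blast
  moreover have "\<forall>\<^sub>F lam in at_right 0. \<forall>x. \<bar>x\<bar> < \<delta> \<and> peq sig f p xs x lam = 0 \<longrightarrow> x = xp lam \<or> x = xm lam"
    using roots by (rule eventually_mono) blast
  ultimately show ?thesis
    using \<open>\<delta> > 0\<close> by blast
qed

theorem lemma4p19:
  fixes sig :: "'s::finite \<Rightarrow> 'c::finite \<Rightarrow> 'c" and s1 :: 's
    and B :: "'c set" and p :: 'c and K :: "'c set"
  assumes "network sig s1"
  shows "generically sig K (\<lambda>f.
     \<forall>(xs :: 'c \<Rightarrow> real \<Rightarrow> real) (d :: 'c \<Rightarrow> real) (xi :: 'c \<Rightarrow> nat).
       assumption_B sig f \<and>
       (\<forall>q. maximal_cell sig q \<longrightarrow> \<not> critical sig f q) \<and>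
       root_subnetwork sig f B \<and> p \<notin> B \<and> critical sig f p \<and>
       hyp_H sig p xs d xi \<and> cond_SN sig f p d xi \<longrightarrow>
       (let c = SNsum sig f p d xi / Fsum sig f p; X = Xi sig p xi in
         (c > 0 \<longrightarrow>
            (\<exists>\<delta>>0. \<forall>\<^sub>F lam in at_right 0. \<forall>x. \<bar>x\<bar> < \<delta> \<longrightarrow> peq sig f p xs x lam \<noteq> 0)) \<and>
         (c < 0 \<longrightarrow>
            (let dplus = sqrt (- c); dminus = - sqrt (- c) in
              dplus \<noteq> 0 \<and> dminus \<noteq> 0 \<and>
              (\<exists>xp xm :: real \<Rightarrow> real.
                 (\<forall>\<^sub>F lam in at_right 0.
                    peq sig f p xs (xp lam) lam = 0 \<and> peq sig f p xs (xm lam) lam = 0) \<and>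
                 (\<lambda>lam. xp lam - dplus * lam powr (2 powr (- (real X + 1))))
                   \<in> O[at_right 0](\<lambda>lam. lam powr (2 powr (- real X))) \<and>
                 (\<lambda>lam. xm lam - dminus * lam powr (2 powr (- (real X + 1))))
                   \<in> O[at_right 0](\<lambda>lam. lam powr (2 powr (- real X))) \<and>
                 (\<exists>\<delta>>0. \<forall>\<^sub>F lam in at_right 0. \<forall>x.
                    \<bar>x\<bar> < \<delta> \<and> peq sig f p xs x lam = 0 \<longrightarrow> x = xp lam \<or> x = xm lam))))))"
proof (rule generically_if_Fsum_nonzero[OF assms, where p = p], goal_cases)
  case (1 f)
  then show ?case
    using peq_no_small_solutions[of f] peq_saddle_node_branches[of f] by (auto simp: Let_def)
qed

end
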